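(* Let $p$ be an odd prime, $0<\alpha\le 1$, and $\beta<\alpha^3$. Put $\gamma=\alpha^3+(\alpha^3-\beta)/2$, and, if additionally $\alpha^3>2^{8+8C_p}\beta$, one may instead put $\gamma=(\alpha^3/\beta)^{1/(2C_p)}\alpha^3$. Then $\gamma>\alpha^3$, and for each $\delta>0$ there is $n'=n'_p(\alpha,\beta,\delta)$ such that if $n>n'$ and $f:\mathbb{F}_p^n\to[0,1]$ has $\mathbb{E}[f]=\alpha$ and $\mathbb{E}_{x,d\in\mathbb{F}_p^n}[f(x)f(x+d)f(x+2d)]\le\beta$, then there is a nonzero $d\in\mathbb{F}_p^n$ with $\mathbb{E}_{x}[f(x)f(x+d)f(x+2d)]\ge\gamma-\delta$.
   Context: $C_p\ge1$ is a constant depending only on $p$ (with $C_p=\Theta(\log p)$) such that for every $m\ge1$ and every $X\subseteq\mathbb{F}_p^m$ with $|X|=xp^m$, the number of pairs $(a,d)\in(\mathbb{F}_p^m)^2$ with $a,a+d,a+2d\in X$ is at least $x^{C_p}p^{2m}$. *)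

theory Defs
  imports Complex_Main "HOL-Library.FuncSet" "HOL-Computational_Algebra.Primes"
begin

text \<open>The vector space F_p^n, represented as functions {..<n} -> {..<p}
  (extensional, i.e. undefined outside {..<n}), with coordinatewise addition mod p.\<close>

definition Fpn :: "nat \<Rightarrow> nat \<Rightarrow> (nat \<Rightarrow> nat) set" where
  "Fpn p n = PiE {..<n} (\<lambda>_. {..<p})"

definition vadd :: "nat \<Rightarrow> nat \<Rightarrow> (nat \<Rightarrow> nat) \<Rightarrow> (nat \<Rightarrow> nat) \<Rightarrow> (nat \<Rightarrow> nat)" where
  "vadd p n x y = (\<lambda>i\<in>{..<n}. (x i + y i) mod p)"

definition vzero :: "nat \<Rightarrow> (nat \<Rightarrow> nat)" where
  "vzero n = (\<lambda>i\<in>{..<n}. 0)"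

definition avg :: "'a set \<Rightarrow> ('a \<Rightarrow> real) \<Rightarrow> real" where
  "avg A g = (\<Sum>x\<in>A. g x) / real (card A)"

definition AP_constant :: "nat \<Rightarrow> real \<Rightarrow> bool" where
  "AP_constant p C \<longleftrightarrow> C \<ge> 1 \<and>
     (\<forall>m\<ge>1. \<forall>X \<subseteq> Fpn p m.
        real (card {(a, d) \<in> Fpn p m \<times> Fpn p m.
                    a \<in> X \<and> vadd p m a d \<in> X \<and> vadd p m (vadd p m a d) d \<in> X})
        \<ge> (real (card X) / real p ^ m) powr C * real p ^ (2 * m))"

definition increment_conclusion :: "nat \<Rightarrow> real \<Rightarrow> real \<Rightarrow> real \<Rightarrow> bool" where
  "increment_conclusion p \<alpha> \<beta> \<gamma> \<longleftrightarrow> \<gamma> > \<alpha> ^ 3 \<and>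
     (\<forall>\<delta>>0. \<exists>n'. \<forall>n>n'. \<forall>f :: (nat \<Rightarrow> nat) \<Rightarrow> real.
        (\<forall>x\<in>Fpn p n. 0 \<le> f x \<and> f x \<le> 1) \<and>
        avg (Fpn p n) f = \<alpha> \<and>
        avg (Fpn p n \<times> Fpn p n)
          (\<lambda>(x, d). f x * f (vadd p n x d) * f (vadd p n (vadd p n x d) d)) \<le> \<beta>
        \<longrightarrow> (\<exists>d\<in>Fpn p n. d \<noteq> vzero n \<and>
              avg (Fpn p n) (\<lambda>x. f x * f (vadd p n x d) * f (vadd p n (vadd p n x d) d))
                \<ge> \<gamma> - \<delta>))"

end

theory Submission
  imports Defs "HOL-Analysis.Convex"
begin

(*
  By an arithmetic regularity lemma (an energy increment on the Fourier side), f can be replaced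
  by its average g over the cosets of a subspace W of bounded codimension, changing both the total
  density of 3-term progressions and the density of progressions with common difference in W by
  at most epsilon. As g is constant on cosets of W, the progressions with difference in W have
  density about E[g^3], so for n large some nonzero d in W has E_x f(x) f(x+d) f(x+2d) close to
  E[g^3]. It remains to bound E[g^3] from below. Writing g = alpha + h, the cubes gain 2 alpha Var(h)
  while the progression density loses at most Var(h)^(3/2), whence 2 E[g^3] + Lambda(g) >= 3 alpha^3;
  this gives the first gamma. For the second, g >= alpha/2 on a set X of density mu with
  alpha^3 <= 16 E[g^3] mu^2; X spans at least mu^C_p p^(2n) progressions, so Lambda(g) <= 2 beta
  forces mu to be small, and hence E[g^3] to be large.
*)

lemma sum_swap3:
  "(\<Sum>x\<in>A. \<Sum>y\<in>B. \<Sum>z\<in>C. f x y z) = (\<Sum>z\<in>C. \<Sum>x\<in>A. \<Sum>y\<in>B. f x y z)"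
proof -
  have "(\<Sum>x\<in>A. \<Sum>y\<in>B. \<Sum>z\<in>C. f x y z) = (\<Sum>x\<in>A. \<Sum>z\<in>C. \<Sum>y\<in>B. f x y z)"
    by (intro sum.cong refl sum.swap)
  also have "\<dots> = (\<Sum>z\<in>C. \<Sum>x\<in>A. \<Sum>y\<in>B. f x y z)" by (rule sum.swap)
  finally show ?thesis .
qed

lemma sum_swap5:
  "(\<Sum>x\<in>A. \<Sum>y\<in>B. \<Sum>r\<in>R. \<Sum>s\<in>S. \<Sum>t\<in>T. f x y r s t)
    = (\<Sum>r\<in>R. \<Sum>s\<in>S. \<Sum>t\<in>T. \<Sum>x\<in>A. \<Sum>y\<in>B. f x y r s t)"
proof -
  have "(\<Sum>x\<in>A. \<Sum>y\<in>B. \<Sum>r\<in>R. \<Sum>s\<in>S. \<Sum>t\<in>T. f x y r s t)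
      = (\<Sum>r\<in>R. \<Sum>x\<in>A. \<Sum>y\<in>B. \<Sum>s\<in>S. \<Sum>t\<in>T. f x y r s t)" by (rule sum_swap3)
  also have "\<dots> = (\<Sum>r\<in>R. \<Sum>s\<in>S. \<Sum>x\<in>A. \<Sum>y\<in>B. \<Sum>t\<in>T. f x y r s t)"
    by (intro sum.cong refl sum_swap3)
  also have "\<dots> = (\<Sum>r\<in>R. \<Sum>s\<in>S. \<Sum>t\<in>T. \<Sum>x\<in>A. \<Sum>y\<in>B. f x y r s t)"
    by (intro sum.cong refl sum_swap3)
  finally show ?thesis .
qed

lemma sum_product3:
  fixes a b c :: "_ \<Rightarrow> 'c::comm_semiring_0"
  shows "(\<Sum>r\<in>R. a r) * (\<Sum>s\<in>S. b s) * (\<Sum>t\<in>T. c t) = (\<Sum>r\<in>R. \<Sum>s\<in>S. \<Sum>t\<in>T. a r * b s * c t)"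
proof -
  have "(\<Sum>r\<in>R. a r) * (\<Sum>s\<in>S. b s) * (\<Sum>t\<in>T. c t) = (\<Sum>r\<in>R. \<Sum>s\<in>S. a r * b s) * (\<Sum>t\<in>T. c t)"
    by (simp only: sum_product)
  also have "\<dots> = (\<Sum>r\<in>R. (\<Sum>s\<in>S. a r * b s) * (\<Sum>t\<in>T. c t))"
    by (rule sum_distrib_right)
  also have "\<dots> = (\<Sum>r\<in>R. \<Sum>s\<in>S. \<Sum>t\<in>T. a r * b s * c t)"
    by (simp only: sum_product)
  finally show ?thesis .
qed

lemma sum_le_sum_level_set:
  fixes g :: "'a \<Rightarrow> real"
  assumes "finite A" and "0 \<le> t"
  shows "sum g A \<le> sum g {x\<in>A. t \<le> g x} + real (card A) * t"
proof -
  have "sum g A = sum g {x\<in>A. t \<le> g x} + sum g (A - {x\<in>A. t \<le> g x})"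
    using sum.subset_diff[of "{x\<in>A. t \<le> g x}" A g] assms(1) by (simp add: add.commute)
  also have "sum g (A - {x\<in>A. t \<le> g x}) \<le> (\<Sum>x\<in>A - {x\<in>A. t \<le> g x}. t)" by (intro sum_mono) auto
  also have "\<dots> \<le> (\<Sum>x\<in>A. t)" using assms by (intro sum_mono2) auto
  finally show ?thesis by simp
qed

lemma sum_squares_sq_le:
  fixes g :: "'a \<Rightarrow> real"
  assumes "\<And>x. x\<in>A \<Longrightarrow> 0 \<le> g x"
  shows "(\<Sum>x\<in>A. (g x)\<^sup>2)\<^sup>2 \<le> (\<Sum>x\<in>A. (g x)^3) * sum g A"
proof -
  have "(\<Sum>x\<in>A. (g x * sqrt (g x)) * sqrt (g x))\<^sup>2
      \<le> (\<Sum>x\<in>A. (g x * sqrt (g x))\<^sup>2) * (\<Sum>x\<in>A. (sqrt (g x))\<^sup>2)"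
    by (rule Cauchy_Schwarz_ineq_sum)
  moreover have "g x * sqrt (g x) * sqrt (g x) = (g x)\<^sup>2" "(g x * sqrt (g x))\<^sup>2 = (g x)^3"
    "(sqrt (g x))\<^sup>2 = g x" if "x\<in>A" for x
    using assms[OF that] by (simp_all add: power2_eq_square power3_eq_cube mult.assoc)
  ultimately show ?thesis by (simp cong: sum.cong)
qed

text \<open>After j refinement steps at most reg_dim j frequencies have been collected. The threshold
  \<eta>_j = \<epsilon> / (6 p^(reg_dim j)) makes the size of the spanned subgroup times \<eta>_j at most \<epsilon>/6,
  and by Parseval at most 1/\<eta>_j^2 frequencies exceed it. A step that does not yield the lemma
  raises the energy by \<epsilon>^2/36, so reg_steps steps suffice.\<close>

fun reg_dim :: "nat \<Rightarrow> real \<Rightarrow> nat \<Rightarrow> nat" where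
  "reg_dim p \<epsilon> 0 = 0"
| "reg_dim p \<epsilon> (Suc j) = reg_dim p \<epsilon> j + nat \<lceil>(6 * real p ^ reg_dim p \<epsilon> j / \<epsilon>)\<^sup>2\<rceil>"

definition reg_threshold :: "nat \<Rightarrow> real \<Rightarrow> nat \<Rightarrow> real" where
  "reg_threshold p \<epsilon> j = \<epsilon> / (6 * real p ^ reg_dim p \<epsilon> j)"

definition reg_steps :: "real \<Rightarrow> nat" where
  "reg_steps \<epsilon> = nat \<lceil>36 / \<epsilon>\<^sup>2\<rceil> + 1"

definition reg_bound :: "nat \<Rightarrow> real \<Rightarrow> nat" where
  "reg_bound p \<epsilon> = p ^ reg_dim p \<epsilon> (reg_steps \<epsilon>)"

lemma reg_dim_mono: "j \<le> k \<Longrightarrow> reg_dim p \<epsilon> j \<le> reg_dim p \<epsilon> k"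
proof (induction k)
  case 0 then show ?case by simp
next
  case (Suc k) then show ?case by (cases "j = Suc k") auto
qed

section \<open>Finite groups with a symmetric character pairing\<close>

text \<open>G is a finite abelian group of exponent p in which doubling is bijective; chi is a symmetric
  nondegenerate bicharacter, through which G is identified with its dual group.\<close>

locale fourier_group =
  fixes G :: "'a set" and add :: "'a \<Rightarrow> 'a \<Rightarrow> 'a" and zero :: 'a and neg :: "'a \<Rightarrow> 'a"
    and chi :: "'a \<Rightarrow> 'a \<Rightarrow> complex" and p :: nat
  assumes finite_G: "finite G" and zero_in: "zero \<in> G"
    and add_in: "x\<in>G \<Longrightarrow> y\<in>G \<Longrightarrow> add x y \<in> G"
    and neg_in: "x\<in>G \<Longrightarrow> neg x \<in> G"
    and assoc: "x\<in>G \<Longrightarrow> y\<in>G \<Longrightarrow> z\<in>G \<Longrightarrow> add (add x y) z = add x (add y z)"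
    and comm: "x\<in>G \<Longrightarrow> y\<in>G \<Longrightarrow> add x y = add y x"
    and zero_add: "x\<in>G \<Longrightarrow> add zero x = x"
    and add_neg: "x\<in>G \<Longrightarrow> add x (neg x) = zero"
    and p_gt_1: "p > 1"
    and exponent_p: "x\<in>G \<Longrightarrow> (add x ^^ p) zero = zero"
    and bij_double: "bij_betw (\<lambda>x. add x x) G G"
    and chi_add: "r\<in>G \<Longrightarrow> x\<in>G \<Longrightarrow> y\<in>G \<Longrightarrow> chi r (add x y) = chi r x * chi r y"
    and chi_sym: "r\<in>G \<Longrightarrow> x\<in>G \<Longrightarrow> chi r x = chi x r"
    and chi_norm: "r\<in>G \<Longrightarrow> x\<in>G \<Longrightarrow> cmod (chi r x) = 1"
    and sum_chi_nonzero: "r\<in>G \<Longrightarrow> r \<noteq> zero \<Longrightarrow> (\<Sum>x\<in>G. chi r x) = 0"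
begin

lemma add_zero: "x\<in>G \<Longrightarrow> add x zero = x"
  using comm zero_add zero_in by metis

lemma neg_add: "x\<in>G \<Longrightarrow> add (neg x) x = zero"
  using comm add_neg neg_in by metis

lemma add_left_cancel: assumes "a\<in>G" "x\<in>G" "y\<in>G" "add a x = add a y" shows "x = y"
proof -
  have e: "add (neg a) (add a z) = z" if "z\<in>G" for z
    using assoc[of "neg a" a z] assms that neg_in neg_add zero_add by simp
  have "add (neg a) (add a x) = add (neg a) (add a y)" using assms by simp
  then show ?thesis using e assms by metis
qed

lemma bij_translate: "a\<in>G \<Longrightarrow> bij_betw (add a) G G"
  unfolding bij_betw_def inj_on_def
proof safe
  fix x y assume "a\<in>G" "x\<in>G" "y\<in>G" "add a x = add a y" then show "x = y" using add_left_cancel by blast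
next
  fix x assume "a\<in>G" "x\<in>G" then show "add a x \<in> G" by (rule add_in)
next
  fix x assume a: "a\<in>G" "x\<in>G"
  then have "add a (add (neg a) x) = x" by (simp add: assoc[symmetric] neg_in add_neg zero_add)
  then show "x \<in> add a ` G" using a neg_in add_in by (metis image_eqI)
qed

lemma sum_translate: "a\<in>G \<Longrightarrow> (\<Sum>x\<in>G. g (add a x)) = (\<Sum>x\<in>G. g x)"
  using sum.reindex_bij_betw[OF bij_translate] by blast

lemma sum_translate_right: assumes "a\<in>G" shows "(\<Sum>x\<in>G. g (add x a)) = (\<Sum>x\<in>G. g x)"
proof -
  have "(\<Sum>x\<in>G. g (add x a)) = (\<Sum>x\<in>G. g (add a x))"
  proof (rule sum.cong)
    fix x assume "x\<in>G" then show "g (add x a) = g (add a x)" using comm[of x a] assms by simp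
  qed simp
  then show ?thesis using sum_translate[OF assms] by simp
qed

lemma sum_double: "(\<Sum>x\<in>G. g (add x x)) = (\<Sum>x\<in>G. g x)"
  using sum.reindex_bij_betw[OF bij_double] by blast

lemma chi_zero_right: "r\<in>G \<Longrightarrow> chi r zero = 1"
proof -
  assume r: "r\<in>G"
  have "chi r zero = chi r zero * chi r zero" using chi_add[OF r zero_in zero_in] zero_add zero_in by simp
  moreover have "chi r zero \<noteq> 0" using chi_norm[OF r zero_in] by auto
  ultimately show ?thesis by (metis mult_cancel_left2)
qed

lemma chi_zero_left: "x\<in>G \<Longrightarrow> chi zero x = 1"
  using chi_sym chi_zero_right zero_in by metis

lemma chi_add_left: assumes "r\<in>G" "s\<in>G" "x\<in>G" shows "chi (add r s) x = chi r x * chi s x"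
proof -
  have "chi (add r s) x = chi x (add r s)" using chi_sym assms add_in by simp
  also have "\<dots> = chi x r * chi x s" using chi_add assms by simp
  also have "\<dots> = chi r x * chi s x" using chi_sym assms by simp
  finally show ?thesis .
qed

lemma cnj_chi: assumes "r\<in>G" "x\<in>G" shows "cnj (chi r x) = chi r (neg x)"
proof -
  have "chi r x * chi r (neg x) = 1" using chi_add[OF assms(1) assms(2) neg_in[OF assms(2)]] add_neg assms chi_zero_right by simp
  moreover have "chi r x * cnj (chi r x) = 1" using chi_norm[OF assms] by (metis complex_norm_square of_real_1 power_one)
  ultimately have inv: "chi r x * chi r (neg x) = 1" and unit: "chi r x * cnj (chi r x) = 1" by auto
  have "cnj (chi r x) = cnj (chi r x) * (chi r x * chi r (neg x))" by (simp add: inv)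
  also have "\<dots> = (chi r x * cnj (chi r x)) * chi r (neg x)" by (simp add: mult_ac)
  also have "\<dots> = chi r (neg x)" by (simp add: unit)
  finally show ?thesis .
qed

lemma cnj_chi_left: assumes "r\<in>G" "x\<in>G" shows "cnj (chi r x) = chi (neg r) x"
  using cnj_chi chi_sym assms neg_in by metis

lemma chi_orthogonality: assumes "r\<in>G" "s\<in>G"
  shows "(\<Sum>x\<in>G. chi r x * cnj (chi s x)) = (if r = s then of_nat (card G) else 0)"
proof -
  have "(\<Sum>x\<in>G. chi r x * cnj (chi s x)) = (\<Sum>x\<in>G. chi (add r (neg s)) x)"
    using assms by (intro sum.cong) (auto simp: cnj_chi_left chi_add_left neg_in)
  also have "\<dots> = (if r = s then of_nat (card G) else 0)"
  proof (cases "r = s")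
    case True then show ?thesis using assms by (simp add: add_neg chi_zero_left)
  next
    case False
    have "add r (neg s) \<noteq> zero"
    proof
      assume "add r (neg s) = zero"
      then have "add (add r (neg s)) s = s" using assms zero_add by simp
      then have "r = s" using assms by (simp add: assoc neg_in neg_add add_zero)
      then show False using False by simp
    qed
    then show ?thesis using False sum_chi_nonzero assms add_in neg_in by simp
  qed
  finally show ?thesis .
qed

lemma card_G_pos: "card G > 0" using finite_G zero_in card_gt_0_iff by blast

definition fourier :: "('a \<Rightarrow> complex) \<Rightarrow> 'a \<Rightarrow> complex" where
  "fourier g r = (\<Sum>x\<in>G. g x * cnj (chi r x)) / of_nat (card G)"

lemma fourier_mult_chi: assumes "x\<in>G" "r\<in>G"
  shows "fourier g r * chi r x = (\<Sum>y\<in>G. g y * (chi x r * cnj (chi y r))) / of_nat (card G)"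
proof -
  have "fourier g r * chi r x = (\<Sum>y\<in>G. g y * cnj (chi r y) * chi r x) / of_nat (card G)"
    unfolding fourier_def by (simp add: sum_distrib_right)
  also have "\<dots> = (\<Sum>y\<in>G. g y * (chi x r * cnj (chi y r))) / of_nat (card G)"
  proof -
    have "g y * cnj (chi r y) * chi r x = g y * (chi x r * cnj (chi y r))" if "y\<in>G" for y
      using that assms chi_sym by (metis mult.commute mult.left_commute)
    then show ?thesis by (metis (no_types, lifting) sum.cong)
  qed
  finally show ?thesis .
qed

lemma fourier_inversion: assumes "x\<in>G" shows "(\<Sum>r\<in>G. fourier g r * chi r x) = g x"
proof -
  have "(\<Sum>r\<in>G. fourier g r * chi r x) = (\<Sum>r\<in>G. (\<Sum>y\<in>G. g y * (chi x r * cnj (chi y r))) / of_nat (card G))"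
    using fourier_mult_chi[OF assms] by (metis (no_types, lifting) sum.cong)
  also have "\<dots> = (\<Sum>r\<in>G. \<Sum>y\<in>G. g y * (chi x r * cnj (chi y r))) / of_nat (card G)"
    by (simp only: sum_divide_distrib)
  also have "\<dots> = (\<Sum>y\<in>G. g y * (\<Sum>r\<in>G. chi x r * cnj (chi y r))) / of_nat (card G)"
    by (subst sum.swap) (simp add: sum_distrib_left)
  also have "\<dots> = (\<Sum>y\<in>G. if x = y then g y * of_nat (card G) else 0) / of_nat (card G)"
    using assms by (intro arg_cong2[where f="(/)"] sum.cong refl) (simp add: chi_orthogonality)
  also have "\<dots> = g x" using assms finite_G card_G_pos by auto
  finally show ?thesis .
qed

lemma parseval: "(\<Sum>r\<in>G. (cmod (fourier g r))^2) = (\<Sum>x\<in>G. (cmod (g x))^2) / real (card G)"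
proof -
  have "complex_of_real (\<Sum>r\<in>G. (cmod (fourier g r))^2) = (\<Sum>r\<in>G. complex_of_real ((cmod (fourier g r))^2))"
    by (simp only: of_real_sum)
  also have "\<dots> = (\<Sum>r\<in>G. fourier g r * cnj (fourier g r))"
    by (simp only: complex_norm_square)
  also have "\<dots> = (\<Sum>r\<in>G. \<Sum>x\<in>G. cnj (g x) * (fourier g r * chi r x)) / of_nat (card G)"
    unfolding fourier_def[of g] by (simp add: sum_divide_distrib sum_distrib_left mult_ac)
  also have "\<dots> = (\<Sum>x\<in>G. cnj (g x) * (\<Sum>r\<in>G. fourier g r * chi r x)) / of_nat (card G)"
    by (subst sum.swap) (simp add: sum_distrib_left)
  also have "\<dots> = (\<Sum>x\<in>G. cnj (g x) * g x) / of_nat (card G)"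
    by (simp add: fourier_inversion)
  also have "\<dots> = (\<Sum>x\<in>G. g x * cnj (g x)) / of_nat (card G)"
    by (simp only: mult.commute)
  also have "\<dots> = (\<Sum>x\<in>G. complex_of_real ((cmod (g x))^2)) / of_nat (card G)"
    by (simp only: complex_norm_square)
  also have "\<dots> = complex_of_real ((\<Sum>x\<in>G. (cmod (g x))^2) / real (card G))"
    by (simp only: of_real_sum of_real_divide of_real_of_nat_eq)
  finally show ?thesis using of_real_eq_iff by blast
qed

lemma add_add_swap: "a\<in>G \<Longrightarrow> b\<in>G \<Longrightarrow> c\<in>G \<Longrightarrow> d\<in>G \<Longrightarrow> add (add a b) (add c d) = add (add a c) (add b d)"
proof -
  assume h: "a\<in>G" "b\<in>G" "c\<in>G" "d\<in>G"
  have "add (add a b) (add c d) = add a (add b (add c d))" using h by (simp add: assoc add_in)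
  also have "add b (add c d) = add c (add b d)"
  proof -
    have "add b (add c d) = add (add b c) d" using h by (simp add: assoc)
    also have "add b c = add c b" using h comm by simp
    also have "add (add c b) d = add c (add b d)" using h by (simp add: assoc)
    finally show ?thesis .
  qed
  also have "add a (add c (add b d)) = add (add a c) (add b d)" using h by (simp add: assoc add_in)
  finally show ?thesis .
qed

lemma neg_unique: "a\<in>G \<Longrightarrow> b\<in>G \<Longrightarrow> add a b = zero \<Longrightarrow> b = neg a"
  using add_left_cancel[of a b "neg a"] add_neg neg_in by simp

lemma neg_neg: "a\<in>G \<Longrightarrow> neg (neg a) = a"
  using neg_unique[of "neg a" a] neg_add neg_in by simp

lemma neg_add_distrib: "a\<in>G \<Longrightarrow> b\<in>G \<Longrightarrow> neg (add a b) = add (neg a) (neg b)"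
proof -
  assume h: "a\<in>G" "b\<in>G"
  have "add (add a b) (add (neg a) (neg b)) = add (add a (neg a)) (add b (neg b))"
    using h add_add_swap neg_in by simp
  also have "\<dots> = zero" using h by (simp add: add_neg zero_add zero_in)
  finally show ?thesis using neg_unique[of "add a b" "add (neg a) (neg b)"] h add_in neg_in by simp
qed

definition smul :: "nat \<Rightarrow> 'a \<Rightarrow> 'a" where "smul k x = (add x ^^ k) zero"

lemma smul_0[simp]: "smul 0 x = zero" by (simp add: smul_def)
lemma smul_Suc: "smul (Suc k) x = add x (smul k x)" by (simp add: smul_def)

lemma smul_in: "x\<in>G \<Longrightarrow> smul k x \<in> G"
  by (induction k) (auto simp: smul_Suc zero_in add_in)

lemma smul_add: "x\<in>G \<Longrightarrow> smul (a+b) x = add (smul a x) (smul b x)"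
proof (induction a)
  case 0 then show ?case by (simp add: zero_add smul_in)
next
  case (Suc a) then show ?case by (simp add: smul_Suc assoc smul_in)
qed

lemma smul_mult_p: "x\<in>G \<Longrightarrow> smul (q*p) x = zero"
proof (induction q)
  case 0 then show ?case by simp
next
  case (Suc q)
  have "smul (Suc q * p) x = add (smul p x) (smul (q*p) x)" using Suc smul_add by (simp add: add.commute)
  then show ?case using Suc exponent_p by (simp add: smul_def zero_add zero_in)
qed

lemma smul_mod: assumes "x\<in>G" shows "smul k x = smul (k mod p) x"
proof -
  have "smul k x = smul ((k div p) * p + k mod p) x" by simp
  also have "\<dots> = smul (k mod p) x" using assms by (simp only: smul_add smul_mult_p zero_add smul_in)
  finally show ?thesis .
qed

lemma chi_smul: "r\<in>G \<Longrightarrow> x\<in>G \<Longrightarrow> chi (smul k x) r = chi x r ^ k"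
  by (induction k) (simp_all add: smul_Suc chi_add_left smul_in chi_zero_left)

fun span :: "'a list \<Rightarrow> 'a set" where
  "span [] = {zero}"
| "span (l#L) = (\<lambda>(y,k). add y (smul k l)) ` (span L \<times> {..<p})"

lemma span_ConsI: "y \<in> span L \<Longrightarrow> k < p \<Longrightarrow> add y (smul k l) \<in> span (l#L)"
  unfolding span.simps by (rule image_eqI[where x="(y,k)"]) auto

lemma span_subset: "set L \<subseteq> G \<Longrightarrow> span L \<subseteq> G"
  by (induction L) (auto simp: zero_in add_in smul_in)

lemma finite_span: "finite (span L)"
  by (induction L) auto

lemma zero_in_span: "zero \<in> span L"
proof (induction L)
  case Nil then show ?case by simp
next
  case (Cons l L)
  show ?case using span_ConsI[OF Cons, of 0 l] p_gt_1 by (simp add: zero_add zero_in)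
qed

lemma span_add_closed: "set L \<subseteq> G \<Longrightarrow> u \<in> span L \<Longrightarrow> v \<in> span L \<Longrightarrow> add u v \<in> span L"
proof (induction L arbitrary: u v)
  case Nil then show ?case by (simp add: zero_add zero_in)
next
  case (Cons l L)
  then obtain y1 k1 y2 k2 where u: "u = add y1 (smul k1 l)" "y1\<in>span L" and v: "v = add y2 (smul k2 l)" "y2 \<in> span L"
    by auto
  have lG: "l\<in>G" "set L \<subseteq> G" using Cons by auto
  have yG: "y1\<in>G" "y2\<in>G" using u v span_subset lG by auto
  have "add u v = add (add y1 y2) (add (smul k1 l) (smul k2 l))"
    using u v add_add_swap[of y1 "smul k1 l" y2 "smul k2 l"] yG lG smul_in by simp
  also have "\<dots> = add (add y1 y2) (smul ((k1+k2) mod p) l)"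
    using lG smul_add[of l k1 k2] smul_mod[of l "k1+k2"] by simp
  finally have e: "add u v = add (add y1 y2) (smul ((k1+k2) mod p) l)" by simp
  moreover have "add y1 y2 \<in> span L" using Cons.IH lG u v by simp
  moreover have "(k1+k2) mod p < p" using p_gt_1 by simp
  ultimately show ?case using span_ConsI by simp
qed

lemma span_subset_Cons: "set (l#L) \<subseteq> G \<Longrightarrow> span L \<subseteq> span (l#L)"
proof
  fix y assume h: "set (l#L) \<subseteq> G" "y \<in> span L"
  have "y = add y (smul 0 l)" using h span_subset[of L] by (auto simp: add_zero)
  then show "y \<in> span (l#L)" using h p_gt_1 span_ConsI[of y L 0 l] by simp
qed

lemma span_subset_append: "set (S@L) \<subseteq> G \<Longrightarrow> span L \<subseteq> span (S@L)"
  by (induction S) (use span_subset_Cons in fastforce)+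

lemma in_span_Cons: "l\<in>G \<Longrightarrow> l \<in> span (l#L)"
proof -
  assume l: "l\<in>G"
  have "l = add zero (smul 1 l)" using l by (simp add: smul_Suc zero_add add_zero zero_in)
  then show ?thesis using zero_in_span p_gt_1 span_ConsI[of zero L 1 l] by simp
qed

lemma set_subset_span: "set L \<subseteq> G \<Longrightarrow> set L \<subseteq> span L"
proof (induction L)
  case Nil then show ?case by simp
next
  case (Cons l L) then show ?case using in_span_Cons span_subset_Cons by fastforce
qed

lemma card_span_le: "card (span L) \<le> p ^ length L"
proof (induction L)
  case Nil then show ?case by simp
next
  case (Cons l L)
  have "card (span (l#L)) \<le> card (span L \<times> {..<p})"
    unfolding span.simps by (rule card_image_le) (simp add: finite_span)
  also have "\<dots> = card (span L) * p" by (simp add: card_cartesian_product)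
  also have "\<dots> \<le> p ^ length L * p" using Cons by simp
  finally show ?case by (simp add: mult.commute)
qed

definition ann :: "'a list \<Rightarrow> 'a set" where
  "ann L = {x\<in>G. \<forall>l\<in>set L. chi l x = 1}"

lemma ann_subset: "ann L \<subseteq> G" by (auto simp: ann_def)

lemma chi_span_ann: "set L \<subseteq> G \<Longrightarrow> u \<in> span L \<Longrightarrow> x \<in> ann L \<Longrightarrow> chi u x = 1"
proof (induction L arbitrary: u)
  case Nil then show ?case by (simp add: chi_zero_left ann_def)
next
  case (Cons l L)
  then obtain y k where u: "u = add y (smul k l)" "y\<in>span L" by auto
  have lG: "l\<in>G" "set L \<subseteq> G" using Cons by auto
  have xA: "x \<in> ann L" "chi l x = 1" "x\<in>G" using Cons by (auto simp: ann_def)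
  have "chi u x = chi y x * chi (smul k l) x"
    using u chi_add_left[of y "smul k l" x] span_subset[OF lG(2)] lG xA smul_in by auto
  also have "chi (smul k l) x = chi l x ^ k" using chi_smul lG xA by simp
  finally show ?case using Cons.IH lG u xA by simp
qed

lemma zero_in_ann: "set L \<subseteq> G \<Longrightarrow> zero \<in> ann L" by (auto simp: ann_def zero_in chi_zero_right)

lemma ann_add_closed: "x\<in>ann L \<Longrightarrow> y\<in>ann L \<Longrightarrow> set L \<subseteq> G \<Longrightarrow> add x y \<in> ann L"
  by (auto simp: ann_def add_in chi_add)

lemma ann_neg_closed: assumes "x\<in>ann L" "set L \<subseteq> G" shows "neg x \<in> ann L"
proof -
  have "chi l (neg x) = 1" if "l \<in> set L" for l
    using that assms cnj_chi[of l x, symmetric] by (auto simp: ann_def)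
  then show ?thesis using assms by (auto simp: ann_def neg_in)
qed

lemma sum_chi_span: assumes L: "set L \<subseteq> G" and x: "x\<in>G"
  shows "(\<Sum>u\<in>span L. chi u x) = (if x \<in> ann L then of_nat (card (span L)) else 0)"
proof (cases "x \<in> ann L")
  case True then show ?thesis using chi_span_ann[OF L] by simp
next
  case False
  then obtain l where l: "l\<in>set L" "chi l x \<noteq> 1" using x by (auto simp: ann_def)
  have lU: "l \<in> span L" and lG: "l\<in>G" using l set_subset_span[OF L] L by auto
  have sub: "add l ` span L \<subseteq> span L" using span_add_closed[OF L lU] by auto
  have inj: "inj_on (add l) (span L)" using add_left_cancel lG span_subset[OF L] by (meson inj_onI subsetD)
  have eq: "add l ` span L = span L"
    using card_subset_eq[OF finite_span sub] card_image[OF inj] by simp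
  have "(\<Sum>u\<in>span L. chi u x) = (\<Sum>u\<in>span L. chi (add l u) x)"
    using sum.reindex[OF inj, of "\<lambda>u. chi u x"] eq by simp
  also have "\<dots> = (\<Sum>u\<in>span L. chi l x * chi u x)"
  proof (rule sum.cong)
    fix u assume "u \<in> span L" then show "chi (add l u) x = chi l x * chi u x"
      using chi_add_left[of l u x] lG x span_subset[OF L] by auto
  qed simp
  also have "\<dots> = chi l x * (\<Sum>u\<in>span L. chi u x)" by (simp add: sum_distrib_left)
  finally have "(1 - chi l x) * (\<Sum>u\<in>span L. chi u x) = 0" by (simp add: algebra_simps)
  then show ?thesis using l False by simp
qed

lemma card_span_mult_card_ann: assumes L: "set L \<subseteq> G" shows "card (span L) * card (ann L) = card G"
proof -
  have "(\<Sum>x\<in>G. \<Sum>u\<in>span L. chi u x) = (\<Sum>x\<in>G. if x \<in> ann L then of_nat (card (span L)) else 0)"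
    using sum_chi_span[OF L] by simp
  also have "\<dots> = of_nat (card (span L)) * of_nat (card (ann L))"
    using finite_G ann_subset by (simp add: sum.If_cases Int_absorb1)
  finally have 1: "(\<Sum>x\<in>G. \<Sum>u\<in>span L. chi u x) = of_nat (card (span L) * card (ann L))" by simp
  have "(\<Sum>x\<in>G. \<Sum>u\<in>span L. chi u x) = (\<Sum>u\<in>span L. \<Sum>x\<in>G. chi u x)" by (rule sum.swap)
  also have "\<dots> = (\<Sum>u\<in>span L. if u = zero then of_nat (card G) else 0)"
    using sum_chi_nonzero span_subset[OF L] chi_zero_left by (intro sum.cong refl) auto
  also have "\<dots> = of_nat (card G)" using zero_in_span finite_span by simp
  finally show ?thesis using 1 by (metis of_nat_eq_iff)
qed

definition proj :: "'a list \<Rightarrow> ('a \<Rightarrow> complex) \<Rightarrow> 'a \<Rightarrow> complex" where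
  "proj L g x = (\<Sum>u\<in>span L. fourier g u * chi u x)"

lemma fourier_proj: assumes L: "set L \<subseteq> G" and r: "r\<in>G"
  shows "fourier (proj L g) r = (if r \<in> span L then fourier g r else 0)"
proof -
  have "(\<Sum>x\<in>G. proj L g x * cnj (chi r x)) = (\<Sum>x\<in>G. \<Sum>u\<in>span L. fourier g u * (chi u x * cnj (chi r x)))"
    unfolding proj_def by (simp only: sum_distrib_right mult.assoc)
  also have "\<dots> = (\<Sum>u\<in>span L. \<Sum>x\<in>G. fourier g u * (chi u x * cnj (chi r x)))"
    by (rule sum.swap)
  also have "\<dots> = (\<Sum>u\<in>span L. fourier g u * (\<Sum>x\<in>G. chi u x * cnj (chi r x)))"
    by (simp only: sum_distrib_left)
  also have "\<dots> = (\<Sum>u\<in>span L. if u = r then fourier g u * of_nat (card G) else 0)"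
  proof (rule sum.cong)
    fix u assume "u \<in> span L"
    then show "fourier g u * (\<Sum>x\<in>G. chi u x * cnj (chi r x)) = (if u = r then fourier g u * of_nat (card G) else 0)"
      using span_subset[OF L] chi_orthogonality[of u r] r by auto
  qed simp
  also have "\<dots> = (if r \<in> span L then fourier g r * of_nat (card G) else 0)"
    using finite_span by (simp add: sum.delta')
  finally show ?thesis using card_G_pos by (simp add: fourier_def[of "proj L g"])
qed

definition coset :: "'a list \<Rightarrow> 'a \<Rightarrow> 'a set" where
  "coset L x = {y\<in>G. add x (neg y) \<in> ann L}"

lemma sum_span_chi_coset: assumes L: "set L \<subseteq> G" and x: "x\<in>G" and y: "y\<in>G"
  shows "(\<Sum>u\<in>span L. cnj (chi u y) * chi u x) = (if y \<in> coset L x then of_nat (card (span L)) else 0)"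
proof -
  have "cnj (chi u y) * chi u x = chi u (add x (neg y))" if "u\<in>span L" for u
    using that span_subset[OF L] x y cnj_chi[of u y] chi_add[of u x "neg y"] neg_in by (auto simp: mult.commute)
  then have "(\<Sum>u\<in>span L. cnj (chi u y) * chi u x) = (\<Sum>u\<in>span L. chi u (add x (neg y)))"
    by (rule sum.cong[OF refl])
  also have "\<dots> = (if y \<in> coset L x then of_nat (card (span L)) else 0)"
    using sum_chi_span[OF L, of "add x (neg y)"] x y add_in neg_in by (auto simp: coset_def)
  finally show ?thesis .
qed

lemma proj_eq_coset_sum: assumes L: "set L \<subseteq> G" and x: "x\<in>G"
  shows "proj L g x = (\<Sum>y\<in>coset L x. g y) / of_nat (card (ann L))"
proof -
  have cA: "card (ann L) > 0" using card_span_mult_card_ann[OF L] card_G_pos by (metis mult_is_0 neq0_conv)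
  have "proj L g x = (\<Sum>u\<in>span L. (\<Sum>y\<in>G. g y * cnj (chi u y)) * chi u x) / of_nat (card G)"
  proof -
    have "fourier g u * chi u x = (\<Sum>y\<in>G. g y * cnj (chi u y)) * chi u x / of_nat (card G)" for u
      by (simp add: fourier_def)
    then show ?thesis unfolding proj_def by (simp add: sum_divide_distrib)
  qed
  also have "(\<Sum>u\<in>span L. (\<Sum>y\<in>G. g y * cnj (chi u y)) * chi u x) = (\<Sum>u\<in>span L. \<Sum>y\<in>G. g y * (cnj (chi u y) * chi u x))"
    by (simp only: sum_distrib_right mult.assoc)
  also have "\<dots> = (\<Sum>y\<in>G. \<Sum>u\<in>span L. g y * (cnj (chi u y) * chi u x))"
    by (rule sum.swap)
  also have "\<dots> = (\<Sum>y\<in>G. if y \<in> coset L x then g y * of_nat (card (span L)) else 0)"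
    using L x by (intro sum.cong refl) (simp add: sum_distrib_left[symmetric] sum_span_chi_coset)
  also have "\<dots> = (\<Sum>y\<in>coset L x. g y * of_nat (card (span L)))"
  proof -
    have "coset L x = G \<inter> {y. y \<in> coset L x}" by (auto simp: coset_def)
    then show ?thesis using finite_G by (simp add: sum.If_cases)
  qed
  also have "\<dots> = (\<Sum>y\<in>coset L x. g y) * of_nat (card (span L))" by (simp add: sum_distrib_right)
  finally have "proj L g x = (\<Sum>y\<in>coset L x. g y) * of_nat (card (span L)) / of_nat (card G)" .
  also have "\<dots> = (\<Sum>y\<in>coset L x. g y) / of_nat (card (ann L))"
  proof -
    have e: "(of_nat (card G)::complex) = of_nat (card (span L)) * of_nat (card (ann L))"
      using card_span_mult_card_ann[OF L] by (metis of_nat_mult)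
    have "(of_nat (card (span L))::complex) \<noteq> 0" using card_span_mult_card_ann[OF L] card_G_pos by (metis mult_is_0 neq0_conv of_nat_eq_0_iff)
    then show ?thesis using cA unfolding e by (simp add: field_simps)
  qed
  finally show ?thesis .
qed

lemma fourier_const_1: assumes "u\<in>G" shows "fourier (\<lambda>_. 1) u = (if u = zero then 1 else 0)"
proof -
  have "fourier (\<lambda>_. 1) u = (\<Sum>x\<in>G. chi zero x * cnj (chi u x)) / of_nat (card G)"
    unfolding fourier_def by (simp add: chi_zero_left)
  then show ?thesis using chi_orthogonality[OF zero_in assms] card_G_pos by auto
qed

lemma proj_const_1: assumes L: "set L \<subseteq> G" and x: "x\<in>G" shows "proj L (\<lambda>_. 1) x = 1"
proof -
  have "proj L (\<lambda>_. 1) x = (\<Sum>u\<in>span L. if u = zero then 1 else 0)"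
    unfolding proj_def using fourier_const_1 span_subset[OF L] x chi_zero_left by (intro sum.cong) auto
  then show ?thesis using zero_in_span finite_span by simp
qed

lemma card_coset: assumes L: "set L \<subseteq> G" and x: "x\<in>G" shows "card (coset L x) = card (ann L)"
proof -
  have cA: "card (ann L) > 0" using card_span_mult_card_ann[OF L] card_G_pos by (metis mult_is_0 neq0_conv)
  have "(1::complex) = of_nat (card (coset L x)) / of_nat (card (ann L))"
    using proj_eq_coset_sum[OF L x, of "\<lambda>_. 1"] proj_const_1[OF L x] by simp
  then show ?thesis using cA by (simp add: field_simps)
qed

lemma coset_subset: "coset L x \<subseteq> G" by (auto simp: coset_def)

lemma coset_translate: assumes L: "set L \<subseteq> G" and x: "x\<in>G" and d: "d \<in> ann L"
  shows "coset L (add x d) = coset L x"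
proof -
  have dG: "d\<in>G" using d ann_subset by auto
  have "add (add x d) (neg y) \<in> ann L \<longleftrightarrow> add x (neg y) \<in> ann L" if y: "y\<in>G" for y
  proof -
    have ny: "neg y \<in> G" using y neg_in by simp
    have "add (add x d) (neg y) = add (add d x) (neg y)" using x dG comm by simp
    also have "\<dots> = add d (add x (neg y))" using assoc x dG ny by simp
    finally have e: "add (add x d) (neg y) = add d (add x (neg y))" .
    have z: "add x (neg y) \<in> G" using x ny add_in by simp
    have "add (neg d) (add d (add x (neg y))) = add (add (neg d) d) (add x (neg y))"
      using assoc[of "neg d" d "add x (neg y)"] z dG neg_in by simp
    then have e2: "add (neg d) (add d (add x (neg y))) = add x (neg y)" using neg_add dG zero_add z by simp
    show ?thesis using e e2 ann_add_closed[OF d _ L] ann_add_closed[OF ann_neg_closed[OF d L] _ L] by metis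
  qed
  then show ?thesis unfolding coset_def by auto
qed

lemma fourier_diff: "fourier (\<lambda>x. a x - b x) r = fourier a r - fourier b r"
  unfolding fourier_def by (simp add: algebra_simps sum_subtractf diff_divide_distrib)

lemma fourier_zero: "fourier g zero = (\<Sum>x\<in>G. g x) / of_nat (card G)"
  unfolding fourier_def using chi_zero_left by simp

definition cond_exp :: "'a list \<Rightarrow> ('a \<Rightarrow> real) \<Rightarrow> 'a \<Rightarrow> real" where
  "cond_exp L f x = (\<Sum>y\<in>coset L x. f y) / real (card (ann L))"

lemma card_ann_pos: "set L \<subseteq> G \<Longrightarrow> card (ann L) > 0"
  using card_span_mult_card_ann card_G_pos by (metis mult_is_0 neq0_conv)

lemma proj_of_real: assumes L: "set L \<subseteq> G" and x: "x\<in>G"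
  shows "proj L (\<lambda>y. complex_of_real (f y)) x = complex_of_real (cond_exp L f x)"
  using proj_eq_coset_sum[OF L x] by (simp add: cond_exp_def)

lemma cond_exp_bounds: assumes L: "set L \<subseteq> G" and x: "x\<in>G" and f: "\<And>y. y\<in>G \<Longrightarrow> 0 \<le> f y \<and> f y \<le> 1"
  shows "0 \<le> cond_exp L f x" "cond_exp L f x \<le> 1"
proof -
  have s0: "0 \<le> (\<Sum>y\<in>coset L x. f y)" using f coset_subset by (meson subsetD sum_nonneg)
  have "(\<Sum>y\<in>coset L x. f y) \<le> (\<Sum>y\<in>coset L x. 1)" using f coset_subset by (meson subsetD sum_mono)
  also have "\<dots> = real (card (ann L))" using card_coset[OF L x] by simp
  finally have s1: "(\<Sum>y\<in>coset L x. f y) \<le> real (card (ann L))" .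
  show "0 \<le> cond_exp L f x" using s0 by (simp add: cond_exp_def)
  show "cond_exp L f x \<le> 1" using s1 card_ann_pos[OF L] by (simp add: cond_exp_def divide_le_eq)
qed

lemma cond_exp_translate: assumes L: "set L \<subseteq> G" and x: "x\<in>G" and d: "d \<in> ann L"
  shows "cond_exp L f (add x d) = cond_exp L f x"
  using coset_translate[OF L x d] by (simp add: cond_exp_def)

lemma fourier_cong: "(\<And>x. x\<in>G \<Longrightarrow> a x = b x) \<Longrightarrow> fourier a r = fourier b r"
  unfolding fourier_def by (metis (no_types, lifting) sum.cong)

lemma sum_cond_exp: assumes L: "set L \<subseteq> G" shows "(\<Sum>x\<in>G. cond_exp L f x) = (\<Sum>x\<in>G. f x)"
proof -
  let ?f = "\<lambda>y. complex_of_real (f y)"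
  have "fourier (proj L ?f) zero = fourier ?f zero" using fourier_proj[OF L zero_in] zero_in_span by simp
  moreover have "fourier (proj L ?f) zero = fourier (\<lambda>y. complex_of_real (cond_exp L f y)) zero"
    using proj_of_real[OF L] by (intro fourier_cong) simp
  ultimately have "(\<Sum>x\<in>G. complex_of_real (cond_exp L f x)) = (\<Sum>x\<in>G. complex_of_real (f x))"
    using card_G_pos by (simp add: fourier_zero)
  then show ?thesis by (metis of_real_eq_iff of_real_sum)
qed

definition energy :: "'a list \<Rightarrow> ('a \<Rightarrow> real) \<Rightarrow> real" where
  "energy L f = (\<Sum>u\<in>span L. (cmod (fourier (\<lambda>y. complex_of_real (f y)) u))\<^sup>2)"

lemma energy_diff: assumes L: "set L \<subseteq> G" and L': "set L' \<subseteq> G" and sub: "span L \<subseteq> span L'"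
  shows "(\<Sum>x\<in>G. (cond_exp L' f x - cond_exp L f x)\<^sup>2) / real (card G) = energy L' f - energy L f"
proof -
  let ?f = "\<lambda>y. complex_of_real (f y)"
  let ?g = "\<lambda>x. complex_of_real (cond_exp L' f x - cond_exp L f x)"
  have Fg: "fourier ?g r = (if r \<in> span L' - span L then fourier ?f r else 0)" if r: "r\<in>G" for r
  proof -
    have "fourier ?g r = fourier (\<lambda>x. proj L' ?f x - proj L ?f x) r"
      using proj_of_real[OF L] proj_of_real[OF L'] by (intro fourier_cong) simp
    also have "\<dots> = fourier (proj L' ?f) r - fourier (proj L ?f) r" by (rule fourier_diff)
    also have "\<dots> = (if r \<in> span L' - span L then fourier ?f r else 0)"
      using fourier_proj[OF L r] fourier_proj[OF L' r] sub by auto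
    finally show ?thesis .
  qed
  have "(cmod (?g x))\<^sup>2 = (cond_exp L' f x - cond_exp L f x)\<^sup>2" for x by (simp only: norm_of_real power2_abs)
  then have "(\<Sum>x\<in>G. (cond_exp L' f x - cond_exp L f x)\<^sup>2) / real (card G) = (\<Sum>x\<in>G. (cmod (?g x))\<^sup>2) / real (card G)"
    by simp
  also have "\<dots> = (\<Sum>r\<in>G. (cmod (fourier ?g r))\<^sup>2)" by (rule parseval[symmetric])
  also have "\<dots> = (\<Sum>r\<in>G. if r \<in> span L' - span L then (cmod (fourier ?f r))\<^sup>2 else 0)"
    using Fg by (intro sum.cong) auto
  also have "\<dots> = (\<Sum>r\<in>span L' - span L. (cmod (fourier ?f r))\<^sup>2)"
  proof -
    have "span L' - span L = G \<inter> {r. r \<in> span L' - span L}" using span_subset[OF L'] by auto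
    then show ?thesis using finite_G by (simp add: sum.If_cases)
  qed
  also have "\<dots> = energy L' f - energy L f"
    unfolding energy_def using sum_diff[OF finite_span sub] by simp
  finally show ?thesis .
qed

lemma energy_nonneg: "0 \<le> energy L f" unfolding energy_def by (simp add: sum_nonneg)

lemma energy_le_1: assumes L: "set L \<subseteq> G" and f: "\<And>y. y\<in>G \<Longrightarrow> 0 \<le> f y \<and> f y \<le> 1"
  shows "energy L f \<le> 1"
proof -
  let ?f = "\<lambda>y. complex_of_real (f y)"
  have "energy L f \<le> (\<Sum>r\<in>G. (cmod (fourier ?f r))\<^sup>2)"
    unfolding energy_def using span_subset[OF L] finite_G by (intro sum_mono2) auto
  also have "\<dots> = (\<Sum>x\<in>G. (cmod (?f x))\<^sup>2) / real (card G)" by (rule parseval)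
  also have "\<dots> \<le> (\<Sum>x\<in>G. 1) / real (card G)"
  proof -
    have "(cmod (?f x))\<^sup>2 \<le> 1" if "x\<in>G" for x using f[OF that] by (simp add: abs_square_le_1)
    then show ?thesis by (intro divide_right_mono sum_mono) auto
  qed
  also have "\<dots> = 1" using card_G_pos by simp
  finally show ?thesis .
qed

lemma sum_fourier_sq_le_1: assumes a: "\<And>x. x\<in>G \<Longrightarrow> cmod (a x) \<le> 1"
  shows "(\<Sum>r\<in>G. (cmod (fourier a r))\<^sup>2) \<le> 1"
proof -
  have "(\<Sum>r\<in>G. (cmod (fourier a r))\<^sup>2) = (\<Sum>x\<in>G. (cmod (a x))\<^sup>2) / real (card G)" by (rule parseval)
  also have "\<dots> \<le> (\<Sum>x\<in>G. 1) / real (card G)"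
  proof -
    have "(cmod (a x))\<^sup>2 \<le> 1" if "x\<in>G" for x using a[OF that] by (simp add: power_le_one)
    then show ?thesis by (intro divide_right_mono sum_mono) auto
  qed
  also have "\<dots> = 1" using card_G_pos by simp
  finally show ?thesis .
qed

subsection \<open>Counting 3-term progressions\<close>

definition twisted_ap :: "'a \<Rightarrow> ('a \<Rightarrow> complex) \<Rightarrow> ('a \<Rightarrow> complex) \<Rightarrow> ('a \<Rightarrow> complex) \<Rightarrow> complex" where
  "twisted_ap u a b c = (\<Sum>x\<in>G. \<Sum>d\<in>G. chi u d * a x * b (add x d) * c (add (add x d) d)) / (of_nat (card G))\<^sup>2"

lemma add_eq_zero_iff: "a\<in>G \<Longrightarrow> s\<in>G \<Longrightarrow> add a s = zero \<longleftrightarrow> s = neg a"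
  using neg_unique add_neg by auto

lemma chi_ap_product:
  assumes "u\<in>G" "r\<in>G" "s\<in>G" "t\<in>G" "x\<in>G" "d\<in>G"
  shows "chi u d * chi r x * chi s (add x d) * chi t (add (add x d) d)
    = chi (add r (add s t)) x * chi (add u (add s (add t t))) d"
  using assms by (simp add: chi_add chi_add_left add_in mult_ac)

lemma sum_sum_chi:
  assumes "R\<in>G" "S\<in>G"
  shows "(\<Sum>x\<in>G. \<Sum>d\<in>G. chi R x * chi S d) = (if R = zero \<and> S = zero then (of_nat (card G))\<^sup>2 else 0)"
proof -
  have "(\<Sum>x\<in>G. \<Sum>d\<in>G. chi R x * chi S d) = (\<Sum>x\<in>G. chi R x) * (\<Sum>d\<in>G. chi S d)"
    by (simp add: sum_product)
  then show ?thesis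
    using assms sum_chi_nonzero[of R] sum_chi_nonzero[of S] by (auto simp: chi_zero_left power2_eq_square)
qed

lemma sum_ap_constraints:
  assumes u: "u\<in>G"
  shows "(\<Sum>r\<in>G. \<Sum>s\<in>G. \<Sum>t\<in>G. if add r (add s t) = zero \<and> add u (add s (add t t)) = zero then h r s t else 0)
    = (\<Sum>t\<in>G. h (add u t) (neg (add u (add t t))) t)"
proof -
  have solve: "add r (add s t) = zero \<and> add u (add s (add t t)) = zero
      \<longleftrightarrow> s = neg (add u (add t t)) \<and> r = add u t"
    if "r\<in>G" "s\<in>G" "t\<in>G" for r s t
  proof -
    have tt: "add t t \<in> G" "add u (add t t) \<in> G" using u that add_in by auto
    have "add u (add s (add t t)) = add (add u (add t t)) s"
      using u that tt by (metis assoc comm)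
    then have s_iff: "add u (add s (add t t)) = zero \<longleftrightarrow> s = neg (add u (add t t))"
      using add_eq_zero_iff tt that by simp
    have "neg (add (neg (add u (add t t))) t) = add (add u (add t t)) (neg t)"
      using neg_add_distrib tt that neg_in neg_neg by simp
    also have "\<dots> = add u t"
      using u that neg_in add_in by (simp add: assoc add_neg add_zero)
    finally have "neg (add (neg (add u (add t t))) t) = add u t" .
    moreover have "add r (add s t) = zero \<longleftrightarrow> r = neg (add s t)"
      using add_eq_zero_iff[of "add s t" r] that add_in comm by simp
    ultimately show ?thesis using s_iff by auto
  qed
  have "(\<Sum>r\<in>G. \<Sum>s\<in>G. \<Sum>t\<in>G. if add r (add s t) = zero \<and> add u (add s (add t t)) = zero then h r s t else 0)
    = (\<Sum>t\<in>G. \<Sum>r\<in>G. \<Sum>s\<in>G. if s = neg (add u (add t t)) \<and> r = add u t then h r s t else 0)"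
    by (subst sum_swap3) (intro sum.cong refl, simp add: solve)
  also have "\<dots> = (\<Sum>t\<in>G. h (add u t) (neg (add u (add t t))) t)"
  proof (intro sum.cong refl)
    fix t assume t: "t\<in>G"
    have "(\<Sum>s\<in>G. if s = neg (add u (add t t)) \<and> r = add u t then h r s t else 0)
      = (if r = add u t then h r (neg (add u (add t t))) t else 0)" for r
      using u t add_in neg_in finite_G by (cases "r = add u t") simp_all
    then show "(\<Sum>r\<in>G. \<Sum>s\<in>G. if s = neg (add u (add t t)) \<and> r = add u t then h r s t else 0)
      = h (add u t) (neg (add u (add t t))) t"
      using u t add_in finite_G by simp
  qed
  finally show ?thesis .
qed

lemma twisted_ap_fourier: assumes u: "u\<in>G"
  shows "twisted_ap u a b c = (\<Sum>t\<in>G. fourier a (add u t) * fourier b (neg (add u (add t t))) * fourier c t)"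
proof -
  define N where "N = (of_nat (card G) :: complex)"
  define h where "h r s t = fourier a r * fourier b s * fourier c t" for r s t
  have "(\<Sum>x\<in>G. \<Sum>d\<in>G. chi u d * a x * b (add x d) * c (add (add x d) d))
    = (\<Sum>x\<in>G. \<Sum>d\<in>G. \<Sum>r\<in>G. \<Sum>s\<in>G. \<Sum>t\<in>G.
        h r s t * (chi (add r (add s t)) x * chi (add u (add s (add t t))) d))"
  proof (intro sum.cong refl)
    fix x d assume xd: "x\<in>G" "d\<in>G"
    have "chi u d * a x * b (add x d) * c (add (add x d) d)
      = chi u d * ((\<Sum>r\<in>G. fourier a r * chi r x) * (\<Sum>s\<in>G. fourier b s * chi s (add x d))
          * (\<Sum>t\<in>G. fourier c t * chi t (add (add x d) d)))"
      using xd add_in by (simp add: fourier_inversion mult.assoc)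
    also have "\<dots> = (\<Sum>r\<in>G. \<Sum>s\<in>G. \<Sum>t\<in>G.
        h r s t * (chi u d * chi r x * chi s (add x d) * chi t (add (add x d) d)))"
      unfolding sum_product3 h_def by (simp add: sum_distrib_left mult_ac)
    finally show "chi u d * a x * b (add x d) * c (add (add x d) d)
      = (\<Sum>r\<in>G. \<Sum>s\<in>G. \<Sum>t\<in>G. h r s t * (chi (add r (add s t)) x * chi (add u (add s (add t t))) d))"
      using u xd by (simp add: chi_ap_product)
  qed
  also have "\<dots> = (\<Sum>r\<in>G. \<Sum>s\<in>G. \<Sum>t\<in>G. h r s t *
      (\<Sum>x\<in>G. \<Sum>d\<in>G. chi (add r (add s t)) x * chi (add u (add s (add t t))) d))"
    by (subst sum_swap5) (simp add: sum_distrib_left)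
  also have "\<dots> = (\<Sum>r\<in>G. \<Sum>s\<in>G. \<Sum>t\<in>G.
      if add r (add s t) = zero \<and> add u (add s (add t t)) = zero then h r s t * N\<^sup>2 else 0)"
    using u add_in by (intro sum.cong refl) (simp add: sum_sum_chi N_def)
  also have "\<dots> = (\<Sum>t\<in>G. h (add u t) (neg (add u (add t t))) t) * N\<^sup>2"
    by (simp add: sum_ap_constraints[OF u] sum_distrib_right)
  finally show ?thesis
    using card_G_pos unfolding twisted_ap_def h_def N_def by simp
qed

lemma bij_neg: "bij_betw neg G G"
proof -
  have "neg ` G = G"
  proof
    show "neg ` G \<subseteq> G" using neg_in by auto
    show "G \<subseteq> neg ` G"
    proof
      fix x assume "x\<in>G" then show "x \<in> neg ` G" using neg_neg neg_in by (metis image_eqI)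
    qed
  qed
  moreover have "inj_on neg G"
  proof (rule inj_onI)
    fix x y assume "x\<in>G" "y\<in>G" "neg x = neg y"
    then show "x = y" using neg_neg by metis
  qed
  ultimately show ?thesis by (simp add: bij_betw_def)
qed

lemma bij_neg_translate_double: assumes u: "u\<in>G" shows "bij_betw (\<lambda>t. neg (add u (add t t))) G G"
proof -
  have "bij_betw (neg \<circ> (add u \<circ> (\<lambda>t. add t t))) G G"
    using bij_betw_trans[OF bij_betw_trans[OF bij_double bij_translate[OF u]] bij_neg] .
  then show ?thesis by (simp add: comp_def)
qed

lemma sum_bij_Cauchy_Schwarz: assumes "bij_betw \<phi> G G" "bij_betw \<psi> G G"
  shows "(\<Sum>t\<in>G. cmod (X (\<phi> t)) * cmod (Y (\<psi> t))) \<le> sqrt (\<Sum>t\<in>G. (cmod (X t))\<^sup>2) * sqrt (\<Sum>t\<in>G. (cmod (Y t))\<^sup>2)"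
proof -
  have e1: "(\<Sum>t\<in>G. (cmod (X (\<phi> t)))\<^sup>2) = (\<Sum>t\<in>G. (cmod (X t))\<^sup>2)"
    using sum.reindex_bij_betw[OF assms(1), of "\<lambda>t. (cmod (X t))\<^sup>2"] by simp
  have e2: "(\<Sum>t\<in>G. (cmod (Y (\<psi> t)))\<^sup>2) = (\<Sum>t\<in>G. (cmod (Y t))\<^sup>2)"
    using sum.reindex_bij_betw[OF assms(2), of "\<lambda>t. (cmod (Y t))\<^sup>2"] by simp
  have "(\<Sum>t\<in>G. cmod (X (\<phi> t)) * cmod (Y (\<psi> t)))\<^sup>2 \<le> (\<Sum>t\<in>G. (cmod (X t))\<^sup>2) * (\<Sum>t\<in>G. (cmod (Y t))\<^sup>2)"
    using Cauchy_Schwarz_ineq_sum[of "\<lambda>t. cmod (X (\<phi> t))" "\<lambda>t. cmod (Y (\<psi> t))" G] e1 e2 by simp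
  then have "sqrt ((\<Sum>t\<in>G. cmod (X (\<phi> t)) * cmod (Y (\<psi> t)))\<^sup>2) \<le> sqrt ((\<Sum>t\<in>G. (cmod (X t))\<^sup>2) * (\<Sum>t\<in>G. (cmod (Y t))\<^sup>2))"
    using real_sqrt_le_mono by blast
  moreover have "0 \<le> (\<Sum>t\<in>G. cmod (X (\<phi> t)) * cmod (Y (\<psi> t)))" by (simp add: sum_nonneg)
  ultimately show ?thesis by (simp add: real_sqrt_mult)
qed

definition unit_bounded :: "('a \<Rightarrow> complex) \<Rightarrow> bool" where
  "unit_bounded a \<longleftrightarrow> (\<forall>x\<in>G. cmod (a x) \<le> 1)"

lemma unit_bounded_fourier_l2: "unit_bounded a \<Longrightarrow> sqrt (\<Sum>r\<in>G. (cmod (fourier a r))\<^sup>2) \<le> 1"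
  using sum_fourier_sq_le_1 unfolding unit_bounded_def by simp

lemma twisted_ap_le: assumes u: "u\<in>G"
  shows "cmod (twisted_ap u a b c) \<le> (\<Sum>t\<in>G. cmod (fourier a (add u t)) * cmod (fourier b (neg (add u (add t t)))) * cmod (fourier c t))"
  unfolding twisted_ap_fourier[OF u] by (rule order_trans[OF norm_sum]) (simp add: norm_mult)

lemma sum_mult_le_bound: fixes X Y Z :: "'a \<Rightarrow> real"
  assumes "\<And>t. t\<in>G \<Longrightarrow> 0 \<le> X t" "\<And>t. t\<in>G \<Longrightarrow> 0 \<le> Y t" "\<And>t. t\<in>G \<Longrightarrow> Z t \<le> \<eta>"
    "(\<Sum>t\<in>G. X t * Y t) \<le> 1" "0 \<le> \<eta>"
  shows "(\<Sum>t\<in>G. X t * Y t * Z t) \<le> \<eta>"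
proof -
  have "(\<Sum>t\<in>G. X t * Y t * Z t) \<le> (\<Sum>t\<in>G. X t * Y t * \<eta>)"
  proof (rule sum_mono)
    fix t assume t: "t\<in>G"
    have "0 \<le> X t * Y t" using assms(1)[OF t] assms(2)[OF t] by simp
    then show "X t * Y t * Z t \<le> X t * Y t * \<eta>" using assms(3)[OF t] mult_left_mono by blast
  qed
  also have "\<dots> = (\<Sum>t\<in>G. X t * Y t) * \<eta>" by (simp add: sum_distrib_right)
  also have "\<dots> \<le> 1 * \<eta>" using assms(4) assms(5) mult_right_mono by blast
  finally show ?thesis by simp
qed

lemma sqrt_mult_le_1: "0 \<le> b \<Longrightarrow> sqrt a \<le> 1 \<Longrightarrow> sqrt b \<le> 1 \<Longrightarrow> x \<le> sqrt a * sqrt b \<Longrightarrow> x \<le> (1::real)"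
proof -
  assume h: "0 \<le> b" "sqrt a \<le> 1" "sqrt b \<le> 1" "x \<le> sqrt a * sqrt b"
  have "sqrt a * sqrt b \<le> 1" using h(1,2,3) by (intro mult_le_one) auto
  then show ?thesis using h(4) by linarith
qed

lemma twisted_ap_small3: assumes u: "u\<in>G" and ab: "unit_bounded a" "unit_bounded b" and c: "\<And>t. t\<in>G \<Longrightarrow> cmod (fourier c t) \<le> \<eta>"
  shows "cmod (twisted_ap u a b c) \<le> \<eta>"
proof -
  have h0: "0 \<le> \<eta>" using c[OF zero_in] norm_ge_zero order_trans by blast
  have "(\<Sum>t\<in>G. cmod (fourier a (add u t)) * cmod (fourier b (neg (add u (add t t))))) \<le> 1"
    by (rule sqrt_mult_le_1[OF _ unit_bounded_fourier_l2[OF ab(1)] unit_bounded_fourier_l2[OF ab(2)] sum_bij_Cauchy_Schwarz[OF bij_translate[OF u] bij_neg_translate_double[OF u]]])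
      (simp add: sum_nonneg)
  note S1 = this
  have "(\<Sum>t\<in>G. cmod (fourier a (add u t)) * cmod (fourier b (neg (add u (add t t)))) * cmod (fourier c t)) \<le> \<eta>"
    by (rule sum_mult_le_bound) (use c h0 S1 in auto)
  then show ?thesis using twisted_ap_le[OF u, where a=a and b=b and c=c] by linarith
qed

lemma twisted_ap_small2: assumes u: "u\<in>G" and ac: "unit_bounded a" "unit_bounded c" and b: "\<And>t. t\<in>G \<Longrightarrow> cmod (fourier b t) \<le> \<eta>"
  shows "cmod (twisted_ap u a b c) \<le> \<eta>"
proof -
  have h0: "0 \<le> \<eta>" using b[OF zero_in] norm_ge_zero order_trans by blast
  have "(\<Sum>t\<in>G. cmod (fourier a (add u t)) * cmod (fourier c (id t))) \<le> 1"
    by (rule sqrt_mult_le_1[OF _ unit_bounded_fourier_l2[OF ac(1)] unit_bounded_fourier_l2[OF ac(2)] sum_bij_Cauchy_Schwarz[OF bij_translate[OF u] bij_betw_id]])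
      (simp add: sum_nonneg)
  note S1 = this
  have "(\<Sum>t\<in>G. cmod (fourier a (add u t)) * cmod (fourier c t) * cmod (fourier b (neg (add u (add t t))))) \<le> \<eta>"
    by (rule sum_mult_le_bound) (use b h0 u add_in neg_in S1 in auto)
  moreover have "(\<Sum>t\<in>G. cmod (fourier a (add u t)) * cmod (fourier b (neg (add u (add t t)))) * cmod (fourier c t))
     = (\<Sum>t\<in>G. cmod (fourier a (add u t)) * cmod (fourier c t) * cmod (fourier b (neg (add u (add t t)))))"
    by (simp only: mult_ac)
  ultimately show ?thesis using twisted_ap_le[OF u, where a=a and b=b and c=c] by linarith
qed

lemma twisted_ap_small1: assumes u: "u\<in>G" and bc: "unit_bounded b" "unit_bounded c" and a: "\<And>t. t\<in>G \<Longrightarrow> cmod (fourier a t) \<le> \<eta>"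
  shows "cmod (twisted_ap u a b c) \<le> \<eta>"
proof -
  have h0: "0 \<le> \<eta>" using a[OF zero_in] norm_ge_zero order_trans by blast
  have "(\<Sum>t\<in>G. cmod (fourier b (neg (add u (add t t)))) * cmod (fourier c (id t))) \<le> 1"
    by (rule sqrt_mult_le_1[OF _ unit_bounded_fourier_l2[OF bc(1)] unit_bounded_fourier_l2[OF bc(2)] sum_bij_Cauchy_Schwarz[OF bij_neg_translate_double[OF u] bij_betw_id]])
      (simp add: sum_nonneg)
  note S1 = this
  have "(\<Sum>t\<in>G. cmod (fourier b (neg (add u (add t t)))) * cmod (fourier c t) * cmod (fourier a (add u t))) \<le> \<eta>"
    by (rule sum_mult_le_bound) (use a h0 u add_in S1 in auto)
  moreover have "(\<Sum>t\<in>G. cmod (fourier a (add u t)) * cmod (fourier b (neg (add u (add t t)))) * cmod (fourier c t))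
     = (\<Sum>t\<in>G. cmod (fourier b (neg (add u (add t t)))) * cmod (fourier c t) * cmod (fourier a (add u t)))"
    by (simp only: mult_ac)
  ultimately show ?thesis using twisted_ap_le[OF u, where a=a and b=b and c=c] by linarith
qed

definition ap_density :: "'a set \<Rightarrow> ('a \<Rightarrow> real) \<Rightarrow> ('a \<Rightarrow> real) \<Rightarrow> ('a \<Rightarrow> real) \<Rightarrow> real" where
  "ap_density W a b c = (\<Sum>x\<in>G. \<Sum>d\<in>W. a x * b (add x d) * c (add (add x d) d)) / (real (card G) * real (card W))"

lemma ap_density_ann_twisted: assumes L: "set L \<subseteq> G"
  shows "complex_of_real (ap_density (ann L) a b c)
     = (\<Sum>u\<in>span L. twisted_ap u (\<lambda>x. complex_of_real (a x)) (\<lambda>x. complex_of_real (b x)) (\<lambda>x. complex_of_real (c x)))"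
proof -
  define N where "N = (of_nat (card G) :: complex)"
  define h where "h x d = complex_of_real (a x * b (add x d) * c (add (add x d) d))" for x d
  have "(\<Sum>u\<in>span L. twisted_ap u (\<lambda>x. complex_of_real (a x)) (\<lambda>x. complex_of_real (b x)) (\<lambda>x. complex_of_real (c x)))
     = (\<Sum>u\<in>span L. \<Sum>x\<in>G. \<Sum>d\<in>G. chi u d * h x d) / N\<^sup>2"
    unfolding twisted_ap_def h_def N_def by (simp add: sum_divide_distrib mult_ac)
  also have "(\<Sum>u\<in>span L. \<Sum>x\<in>G. \<Sum>d\<in>G. chi u d * h x d) = (\<Sum>x\<in>G. \<Sum>d\<in>G. (\<Sum>u\<in>span L. chi u d) * h x d)"
  proof -
    have "(\<Sum>u\<in>span L. \<Sum>x\<in>G. \<Sum>d\<in>G. chi u d * h x d) = (\<Sum>x\<in>G. \<Sum>d\<in>G. \<Sum>u\<in>span L. chi u d * h x d)"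
      by (rule sum_swap3[symmetric])
    then show ?thesis by (simp only: sum_distrib_right)
  qed
  also have "\<dots> = (\<Sum>x\<in>G. \<Sum>d\<in>G. if d \<in> ann L then of_nat (card (span L)) * h x d else 0)"
    using sum_chi_span[OF L] by (intro sum.cong refl) auto
  also have "\<dots> = (\<Sum>x\<in>G. \<Sum>d\<in>ann L. of_nat (card (span L)) * h x d)"
  proof -
    have "ann L = G \<inter> {d. d \<in> ann L}" using ann_subset by auto
    then show ?thesis using finite_G by (simp add: sum.If_cases)
  qed
  also have "\<dots> = of_nat (card (span L)) * (\<Sum>x\<in>G. \<Sum>d\<in>ann L. h x d)"
    by (simp add: sum_distrib_left)
  finally have 1: "(\<Sum>u\<in>span L. twisted_ap u (\<lambda>x. complex_of_real (a x)) (\<lambda>x. complex_of_real (b x)) (\<lambda>x. complex_of_real (c x)))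
     = of_nat (card (span L)) * (\<Sum>x\<in>G. \<Sum>d\<in>ann L. h x d) / N\<^sup>2" by simp
  have e: "N = of_nat (card (span L)) * of_nat (card (ann L))" using card_span_mult_card_ann[OF L] N_def by (metis of_nat_mult)
  have nz: "(of_nat (card (span L))::complex) \<noteq> 0" "(of_nat (card (ann L))::complex) \<noteq> 0"
    using card_span_mult_card_ann[OF L] card_G_pos by (metis mult_is_0 neq0_conv of_nat_eq_0_iff)+
  have "complex_of_real (ap_density (ann L) a b c) = (\<Sum>x\<in>G. \<Sum>d\<in>ann L. h x d) / (N * of_nat (card (ann L)))"
    unfolding ap_density_def h_def N_def by simp
  also have "\<dots> = of_nat (card (span L)) * (\<Sum>x\<in>G. \<Sum>d\<in>ann L. h x d) / N\<^sup>2"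
    using nz unfolding e by (simp add: field_simps power2_eq_square)
  finally show ?thesis using 1 by simp
qed

lemma ap_density_ann_fourier_small:
  assumes L: "set L \<subseteq> G" and eta_nonneg: "0 \<le> \<eta>"
    and bd: "unit_bounded (\<lambda>x. complex_of_real (a x))" "unit_bounded (\<lambda>x. complex_of_real (b x))" "unit_bounded (\<lambda>x. complex_of_real (c x))"
    and sm: "(\<forall>t\<in>G. cmod (fourier (\<lambda>x. complex_of_real (a x)) t) \<le> \<eta>) \<or> (\<forall>t\<in>G. cmod (fourier (\<lambda>x. complex_of_real (b x)) t) \<le> \<eta>) \<or> (\<forall>t\<in>G. cmod (fourier (\<lambda>x. complex_of_real (c x)) t) \<le> \<eta>)"
  shows "\<bar>ap_density (ann L) a b c\<bar> \<le> real (card (span L)) * \<eta>"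
proof -
  have "\<bar>ap_density (ann L) a b c\<bar> = cmod (complex_of_real (ap_density (ann L) a b c))" by simp
  also have "\<dots> \<le> (\<Sum>u\<in>span L. cmod (twisted_ap u (\<lambda>x. complex_of_real (a x)) (\<lambda>x. complex_of_real (b x)) (\<lambda>x. complex_of_real (c x))))"
    unfolding ap_density_ann_twisted[OF L] by (rule norm_sum)
  also have "\<dots> \<le> (\<Sum>u\<in>span L. \<eta>)"
  proof (rule sum_mono)
    fix u assume "u \<in> span L"
    then have u: "u\<in>G" using span_subset[OF L] by auto
    show "cmod (twisted_ap u (\<lambda>x. complex_of_real (a x)) (\<lambda>x. complex_of_real (b x)) (\<lambda>x. complex_of_real (c x))) \<le> \<eta>"
      using sm twisted_ap_small1[OF u bd(2) bd(3)] twisted_ap_small2[OF u bd(1) bd(3)] twisted_ap_small3[OF u bd(1) bd(2)] by blast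
  qed
  also have "\<dots> = real (card (span L)) * \<eta>" by simp
  finally show ?thesis .
qed

lemma ap_density_abs_le: "\<bar>ap_density W a b c\<bar> \<le> (\<Sum>x\<in>G. \<Sum>d\<in>W. \<bar>a x\<bar> * \<bar>b (add x d)\<bar> * \<bar>c (add (add x d) d)\<bar>) / (real (card G) * real (card W))"
proof -
  have "\<bar>\<Sum>x\<in>G. \<Sum>d\<in>W. a x * b (add x d) * c (add (add x d) d)\<bar> \<le> (\<Sum>x\<in>G. \<Sum>d\<in>W. \<bar>a x\<bar> * \<bar>b (add x d)\<bar> * \<bar>c (add (add x d) d)\<bar>)"
    by (rule order_trans[OF sum_abs], rule sum_mono, rule order_trans[OF sum_abs]) (simp add: abs_mult)
  then show ?thesis unfolding ap_density_def by (simp add: divide_right_mono)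
qed

lemma ap_density_l1_slot1: assumes W: "W \<subseteq> G" "card W > 0" and b: "\<And>x. x\<in>G \<Longrightarrow> \<bar>b x\<bar> \<le> 1" and c: "\<And>x. x\<in>G \<Longrightarrow> \<bar>c x\<bar> \<le> 1"
  shows "\<bar>ap_density W a b c\<bar> \<le> (\<Sum>x\<in>G. \<bar>a x\<bar>) / real (card G)"
proof -
  have "(\<Sum>x\<in>G. \<Sum>d\<in>W. \<bar>a x\<bar> * \<bar>b (add x d)\<bar> * \<bar>c (add (add x d) d)\<bar>) \<le> (\<Sum>x\<in>G. \<Sum>d\<in>W. \<bar>a x\<bar>)"
  proof (intro sum_mono)
    fix x d assume "x\<in>G" "d\<in>W"
    then have "add x d \<in> G" "add (add x d) d \<in> G" using W add_in by auto
    then have "\<bar>b (add x d)\<bar> * \<bar>c (add (add x d) d)\<bar> \<le> 1" using b c by (simp add: mult_le_one)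
    then show "\<bar>a x\<bar> * \<bar>b (add x d)\<bar> * \<bar>c (add (add x d) d)\<bar> \<le> \<bar>a x\<bar>"
      by (metis abs_ge_zero mult.assoc mult_left_le)
  qed
  also have "\<dots> = real (card W) * (\<Sum>x\<in>G. \<bar>a x\<bar>)" by (simp add: sum_distrib_left)
  finally show ?thesis using ap_density_abs_le[of W a b c] W card_G_pos
    by (smt (verit, ccfv_SIG) divide_right_mono mult.commute mult_pos_pos nonzero_mult_divide_mult_cancel_left of_nat_0_less_iff)
qed

lemma ap_density_l1_slot2: assumes W: "W \<subseteq> G" "card W > 0" and a: "\<And>x. x\<in>G \<Longrightarrow> \<bar>a x\<bar> \<le> 1" and c: "\<And>x. x\<in>G \<Longrightarrow> \<bar>c x\<bar> \<le> 1"
  shows "\<bar>ap_density W a b c\<bar> \<le> (\<Sum>x\<in>G. \<bar>b x\<bar>) / real (card G)"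
proof -
  have "(\<Sum>x\<in>G. \<Sum>d\<in>W. \<bar>a x\<bar> * \<bar>b (add x d)\<bar> * \<bar>c (add (add x d) d)\<bar>) \<le> (\<Sum>x\<in>G. \<Sum>d\<in>W. \<bar>b (add x d)\<bar>)"
  proof (intro sum_mono)
    fix x d assume "x\<in>G" "d\<in>W"
    then have "x \<in> G" "add (add x d) d \<in> G" using W add_in by auto
    then have "\<bar>a x\<bar> * \<bar>c (add (add x d) d)\<bar> \<le> 1" using a c by (simp add: mult_le_one)
    then show "\<bar>a x\<bar> * \<bar>b (add x d)\<bar> * \<bar>c (add (add x d) d)\<bar> \<le> \<bar>b (add x d)\<bar>"
      by (metis abs_ge_zero mult.commute mult.left_commute mult_left_le)
  qed
  also have "\<dots> = (\<Sum>d\<in>W. \<Sum>x\<in>G. \<bar>b (add x d)\<bar>)" by (rule sum.swap)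
  also have "\<dots> = (\<Sum>d\<in>W. \<Sum>x\<in>G. \<bar>b x\<bar>)"
  proof (rule sum.cong[OF refl])
    fix d assume "d\<in>W" then have d: "d\<in>G" using W by auto
    show "(\<Sum>x\<in>G. \<bar>b (add x d)\<bar>) = (\<Sum>x\<in>G. \<bar>b x\<bar>)" using sum_translate_right[OF d, of "\<lambda>x. \<bar>b x\<bar>"] by simp
  qed
  also have "\<dots> = real (card W) * (\<Sum>x\<in>G. \<bar>b x\<bar>)" by simp
  finally show ?thesis using ap_density_abs_le[of W a b c] W card_G_pos
    by (smt (verit, ccfv_SIG) divide_right_mono mult.commute mult_pos_pos nonzero_mult_divide_mult_cancel_left of_nat_0_less_iff)
qed

lemma ap_density_l1_slot3: assumes W: "W \<subseteq> G" "card W > 0" and a: "\<And>x. x\<in>G \<Longrightarrow> \<bar>a x\<bar> \<le> 1" and b: "\<And>x. x\<in>G \<Longrightarrow> \<bar>b x\<bar> \<le> 1"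
  shows "\<bar>ap_density W a b c\<bar> \<le> (\<Sum>x\<in>G. \<bar>c x\<bar>) / real (card G)"
proof -
  have "(\<Sum>x\<in>G. \<Sum>d\<in>W. \<bar>a x\<bar> * \<bar>b (add x d)\<bar> * \<bar>c (add (add x d) d)\<bar>) \<le> (\<Sum>x\<in>G. \<Sum>d\<in>W. \<bar>c (add (add x d) d)\<bar>)"
  proof (intro sum_mono)
    fix x d assume "x\<in>G" "d\<in>W"
    then have "x \<in> G" "add x d \<in> G" using W add_in by auto
    then have "\<bar>a x\<bar> * \<bar>b (add x d)\<bar> \<le> 1" using a b by (simp add: mult_le_one)
    then show "\<bar>a x\<bar> * \<bar>b (add x d)\<bar> * \<bar>c (add (add x d) d)\<bar> \<le> \<bar>c (add (add x d) d)\<bar>"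
      by (metis abs_ge_zero mult.commute mult_left_le)
  qed
  also have "\<dots> = (\<Sum>d\<in>W. \<Sum>x\<in>G. \<bar>c (add (add x d) d)\<bar>)" by (rule sum.swap)
  also have "\<dots> = (\<Sum>d\<in>W. \<Sum>x\<in>G. \<bar>c x\<bar>)"
  proof (rule sum.cong[OF refl])
    fix d assume "d\<in>W" then have d: "d\<in>G" using W by auto
    have "(\<Sum>x\<in>G. \<bar>c (add (add x d) d)\<bar>) = (\<Sum>x\<in>G. \<bar>c (add x (add d d))\<bar>)"
      using d assoc by (intro sum.cong) auto
    also have "\<dots> = (\<Sum>x\<in>G. \<bar>c x\<bar>)" using sum_translate_right[of "add d d" "\<lambda>x. \<bar>c x\<bar>"] d add_in by simp
    finally show "(\<Sum>x\<in>G. \<bar>c (add (add x d) d)\<bar>) = (\<Sum>x\<in>G. \<bar>c x\<bar>)" .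
  qed
  also have "\<dots> = real (card W) * (\<Sum>x\<in>G. \<bar>c x\<bar>)" by simp
  finally show ?thesis using ap_density_abs_le[of W a b c] W card_G_pos
    by (smt (verit, ccfv_SIG) divide_right_mono mult.commute mult_pos_pos nonzero_mult_divide_mult_cancel_left of_nat_0_less_iff)
qed

lemma ap_density_telescope: "ap_density W f f f - ap_density W g g g = ap_density W (\<lambda>x. f x - g x) f f + ap_density W g (\<lambda>x. f x - g x) f + ap_density W g g (\<lambda>x. f x - g x)"
proof -
  define D where "D = real (card G) * real (card W)"
  define S where "S h = (\<Sum>x\<in>G. \<Sum>d\<in>W. h x d)" for h :: "'a \<Rightarrow> 'a \<Rightarrow> real"
  have AS: "ap_density W a b c = S (\<lambda>x d. a x * b (add x d) * c (add (add x d) d)) / D" for a b c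
    unfolding ap_density_def S_def D_def ..
  have Sd: "S h1 - S h2 = S (\<lambda>x d. h1 x d - h2 x d)" for h1 h2
    unfolding S_def by (simp add: sum_subtractf)
  have Sa: "S h1 + S h2 + S h3 = S (\<lambda>x d. h1 x d + h2 x d + h3 x d)" for h1 h2 h3
    unfolding S_def by (simp add: sum.distrib)
  have e: "f x * f y * f z - g x * g y * g z = (f x - g x) * f y * f z + g x * (f y - g y) * f z + g x * g y * (f z - g z)"
    for x y z by (simp add: algebra_simps)
  have "ap_density W f f f - ap_density W g g g = (S (\<lambda>x d. f x * f (add x d) * f (add (add x d) d)) - S (\<lambda>x d. g x * g (add x d) * g (add (add x d) d))) / D"
    unfolding AS by (simp add: diff_divide_distrib)
  also have "\<dots> = (S (\<lambda>x d. (f x - g x) * f (add x d) * f (add (add x d) d)) + S (\<lambda>x d. g x * (f (add x d) - g (add x d)) * f (add (add x d) d))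
      + S (\<lambda>x d. g x * g (add x d) * (f (add (add x d) d) - g (add (add x d) d)))) / D"
    unfolding Sd Sa e ..
  also have "\<dots> = ap_density W (\<lambda>x. f x - g x) f f + ap_density W g (\<lambda>x. f x - g x) f + ap_density W g g (\<lambda>x. f x - g x)"
    unfolding AS by (simp add: add_divide_distrib)
  finally show ?thesis .
qed

lemma mean_abs_le_sqrt_mean_sq: "(\<Sum>x\<in>G. \<bar>m x\<bar>) / real (card G) \<le> sqrt ((\<Sum>x\<in>G. (m x)\<^sup>2) / real (card G))"
proof -
  have "(\<Sum>x\<in>G. 1 * \<bar>m x\<bar>)\<^sup>2 \<le> (\<Sum>x\<in>G. 1\<^sup>2) * (\<Sum>x\<in>G. \<bar>m x\<bar>\<^sup>2)" by (rule Cauchy_Schwarz_ineq_sum)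
  then have "(\<Sum>x\<in>G. \<bar>m x\<bar>)\<^sup>2 \<le> real (card G) * (\<Sum>x\<in>G. (m x)\<^sup>2)" by simp
  then have "((\<Sum>x\<in>G. \<bar>m x\<bar>) / real (card G))\<^sup>2 \<le> (\<Sum>x\<in>G. (m x)\<^sup>2) / real (card G)"
    using card_G_pos by (simp add: power_divide field_simps power2_eq_square)
  then show ?thesis using real_le_rsqrt by blast
qed

lemma ap_density_invariant: assumes W: "W \<subseteq> G" "card W > 0" and inv: "\<And>x d. x\<in>G \<Longrightarrow> d\<in>W \<Longrightarrow> g (add x d) = g x"
  shows "ap_density W g g g = (\<Sum>x\<in>G. (g x)^3) / real (card G)"
proof -
  have "(\<Sum>x\<in>G. \<Sum>d\<in>W. g x * g (add x d) * g (add (add x d) d)) = (\<Sum>x\<in>G. \<Sum>d\<in>W. (g x)^3)"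
  proof (intro sum.cong refl)
    fix x d assume h: "x\<in>G" "d\<in>W"
    then have "add x d \<in> G" using W add_in by auto
    then show "g x * g (add x d) * g (add (add x d) d) = (g x)^3" using inv h by (simp add: power3_eq_cube)
  qed
  also have "\<dots> = real (card W) * (\<Sum>x\<in>G. (g x)^3)" by (simp add: sum_distrib_left)
  finally show ?thesis unfolding ap_density_def using W by simp
qed

subsection \<open>The arithmetic regularity lemma\<close>

definition large_spectrum :: "('a \<Rightarrow> real) \<Rightarrow> real \<Rightarrow> nat \<Rightarrow> 'a set" where
  "large_spectrum f \<epsilon> j = {r\<in>G. reg_threshold p \<epsilon> j \<le> cmod (fourier (\<lambda>y. complex_of_real (f y)) r)}"

fun spectrum_list :: "('a \<Rightarrow> real) \<Rightarrow> real \<Rightarrow> nat \<Rightarrow> 'a list" where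
  "spectrum_list f \<epsilon> 0 = []"
| "spectrum_list f \<epsilon> (Suc j) = (SOME xs. set xs = large_spectrum f \<epsilon> j \<and> distinct xs) @ spectrum_list f \<epsilon> j"

lemma large_spectrum_list: "set (SOME xs. set xs = large_spectrum f \<epsilon> j \<and> distinct xs) = large_spectrum f \<epsilon> j \<and> distinct (SOME xs. set xs = large_spectrum f \<epsilon> j \<and> distinct xs)"
proof -
  have "finite (large_spectrum f \<epsilon> j)" using finite_G by (simp add: large_spectrum_def)
  then have "\<exists>xs. set xs = large_spectrum f \<epsilon> j \<and> distinct xs" using finite_distinct_list by blast
  then show ?thesis by (rule someI_ex)
qed

lemma large_spectrum_subset: "large_spectrum f \<epsilon> j \<subseteq> G" by (auto simp: large_spectrum_def)

lemma spectrum_list_subset: "set (spectrum_list f \<epsilon> j) \<subseteq> G"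
proof (induction j)
  case 0 then show ?case by simp
next
  case (Suc j) then show ?case using large_spectrum_list[of f \<epsilon> j] large_spectrum_subset[of f \<epsilon> j] by simp
qed

lemma card_large_spectrum: assumes e: "\<epsilon> > 0" and f: "\<And>y. y\<in>G \<Longrightarrow> 0 \<le> f y \<and> f y \<le> 1"
  shows "real (card (large_spectrum f \<epsilon> j)) \<le> (6 * real p ^ reg_dim p \<epsilon> j / \<epsilon>)\<^sup>2"
proof -
  let ?f = "\<lambda>y. complex_of_real (f y)"
  define \<eta> where "\<eta> = reg_threshold p \<epsilon> j"
  have pp: "real p ^ reg_dim p \<epsilon> j > 0" using p_gt_1 by simp
  have eta_pos: "\<eta> > 0" using e pp by (simp add: \<eta>_def reg_threshold_def)
  have "real (card (large_spectrum f \<epsilon> j)) * \<eta>\<^sup>2 = (\<Sum>r\<in>large_spectrum f \<epsilon> j. \<eta>\<^sup>2)" by simp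
  also have "\<dots> \<le> (\<Sum>r\<in>large_spectrum f \<epsilon> j. (cmod (fourier ?f r))\<^sup>2)"
    using eta_pos by (intro sum_mono power_mono) (auto simp: large_spectrum_def \<eta>_def)
  also have "\<dots> \<le> (\<Sum>r\<in>G. (cmod (fourier ?f r))\<^sup>2)"
    using finite_G by (intro sum_mono2) (auto simp: large_spectrum_def)
  also have "\<dots> \<le> 1" using f by (intro sum_fourier_sq_le_1) auto
  finally have "real (card (large_spectrum f \<epsilon> j)) \<le> 1 / \<eta>\<^sup>2" using eta_pos by (simp add: field_simps)
  also have "1 / \<eta>\<^sup>2 = (6 * real p ^ reg_dim p \<epsilon> j / \<epsilon>)\<^sup>2" using e pp
    by (simp add: \<eta>_def reg_threshold_def power_divide)
  finally show ?thesis .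
qed

lemma length_spectrum_list: assumes e: "\<epsilon> > 0" and f: "\<And>y. y\<in>G \<Longrightarrow> 0 \<le> f y \<and> f y \<le> 1"
  shows "length (spectrum_list f \<epsilon> j) \<le> reg_dim p \<epsilon> j"
proof (induction j)
  case 0 then show ?case by simp
next
  case (Suc j)
  have "length (SOME xs. set xs = large_spectrum f \<epsilon> j \<and> distinct xs) = card (large_spectrum f \<epsilon> j)"
    using large_spectrum_list distinct_card by metis
  also have "\<dots> \<le> nat \<lceil>(6 * real p ^ reg_dim p \<epsilon> j / \<epsilon>)\<^sup>2\<rceil>"
    using card_large_spectrum[where f=f and j=j and \<epsilon>=\<epsilon>, OF e f] by linarith
  finally show ?case using Suc by simp
qed

lemma card_span_spectrum_list: assumes e: "\<epsilon> > 0" and f: "\<And>y. y\<in>G \<Longrightarrow> 0 \<le> f y \<and> f y \<le> 1"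
  shows "card (span (spectrum_list f \<epsilon> j)) \<le> p ^ reg_dim p \<epsilon> j"
  using card_span_le[of "spectrum_list f \<epsilon> j"] length_spectrum_list[where f=f and j=j and \<epsilon>=\<epsilon>, OF e f] p_gt_1
  by (meson le_trans one_le_numeral less_imp_le power_increasing)

lemma span_spectrum_list_mono: "span (spectrum_list f \<epsilon> j) \<subseteq> span (spectrum_list f \<epsilon> (Suc j))"
  using span_subset_append spectrum_list_subset by (metis spectrum_list.simps(2))

lemma large_spectrum_in_span: "large_spectrum f \<epsilon> j \<subseteq> span (spectrum_list f \<epsilon> (Suc j))"
  using set_subset_span[OF spectrum_list_subset[of f \<epsilon> "Suc j"]] large_spectrum_list by auto

lemma energy_step: "energy (spectrum_list f \<epsilon> (Suc j)) f - energy (spectrum_list f \<epsilon> j) f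
   = (\<Sum>x\<in>G. (cond_exp (spectrum_list f \<epsilon> (Suc j)) f x - cond_exp (spectrum_list f \<epsilon> j) f x)\<^sup>2) / real (card G)"
  using energy_diff[OF spectrum_list_subset spectrum_list_subset span_spectrum_list_mono] by simp

lemma energy_step_small: assumes f: "\<And>y. y\<in>G \<Longrightarrow> 0 \<le> f y \<and> f y \<le> 1" and s: "\<sigma> > 0" and J: "real J * \<sigma> > 1"
  shows "\<exists>j<J. energy (spectrum_list f \<epsilon> (Suc j)) f - energy (spectrum_list f \<epsilon> j) f \<le> \<sigma>"
proof (rule ccontr)
  assume "\<not> ?thesis"
  then have h: "\<And>j. j < J \<Longrightarrow> energy (spectrum_list f \<epsilon> (Suc j)) f - energy (spectrum_list f \<epsilon> j) f > \<sigma>" by force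
  have "j \<le> J \<Longrightarrow> energy (spectrum_list f \<epsilon> j) f \<ge> real j * \<sigma>" for j
  proof (induction j)
    case 0 then show ?case using energy_nonneg by simp
  next
    case (Suc j) then show ?case using h[of j] by (simp add: algebra_simps)
  qed
  then have "energy (spectrum_list f \<epsilon> J) f \<ge> real J * \<sigma>" by simp
  moreover have "energy (spectrum_list f \<epsilon> J) f \<le> 1" using energy_le_1[OF spectrum_list_subset f] .
  ultimately show False using J by simp
qed

lemma ap_density_telescope_bound: assumes "\<bar>ap_density W (\<lambda>x. f x - s x) f f\<bar> \<le> B" "\<bar>ap_density W s (\<lambda>x. f x - s x) f\<bar> \<le> B" "\<bar>ap_density W s s (\<lambda>x. f x - s x)\<bar> \<le> B"
  shows "\<bar>ap_density W f f f - ap_density W s s s\<bar> \<le> 3 * B"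
  using ap_density_telescope[of W f s] assms by linarith

lemma ann_Nil: "ann [] = G" by (simp add: ann_def)

lemma unit_bounded_of_real: "(\<And>x. x\<in>G \<Longrightarrow> 0 \<le> f x \<and> f x \<le> 1) \<Longrightarrow> unit_bounded (\<lambda>x. complex_of_real (f x))"
  unfolding unit_bounded_def by auto

lemma ap_density_fourier_part: assumes L: "set L \<subseteq> G" and eta_nonneg: "0 \<le> \<eta>"
  and f: "\<And>x. x\<in>G \<Longrightarrow> 0 \<le> f x \<and> f x \<le> 1" and s: "\<And>x. x\<in>G \<Longrightarrow> 0 \<le> s x \<and> s x \<le> 1"
  and sm: "\<And>t. t\<in>G \<Longrightarrow> cmod (fourier (\<lambda>x. complex_of_real (f x - s x)) t) \<le> \<eta>"
  shows "\<bar>ap_density (ann L) f f f - ap_density (ann L) s s s\<bar> \<le> 3 * (real (card (span L)) * \<eta>)"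
proof -
  have bf: "unit_bounded (\<lambda>x. complex_of_real (f x))" using unit_bounded_of_real f by blast
  have bs: "unit_bounded (\<lambda>x. complex_of_real (s x))" using unit_bounded_of_real s by blast
  have bk: "unit_bounded (\<lambda>x. complex_of_real (f x - s x))" unfolding unit_bounded_def norm_of_real
  proof
    fix x assume x: "x\<in>G" then show "\<bar>f x - s x\<bar> \<le> 1" using f[OF x] s[OF x] by (auto simp: abs_le_iff)
  qed
  show ?thesis
    by (rule ap_density_telescope_bound; rule ap_density_ann_fourier_small[OF L eta_nonneg]) (use bf bs bk sm in auto)
qed

lemma ap_density_physical_part: assumes W: "W \<subseteq> G" "card W > 0"
  and s: "\<And>x. x\<in>G \<Longrightarrow> 0 \<le> s x \<and> s x \<le> 1" and g: "\<And>x. x\<in>G \<Longrightarrow> 0 \<le> g x \<and> g x \<le> 1"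
  shows "\<bar>ap_density W s s s - ap_density W g g g\<bar> \<le> 3 * sqrt ((\<Sum>x\<in>G. (s x - g x)\<^sup>2) / real (card G))"
proof -
  have s1: "\<And>x. x\<in>G \<Longrightarrow> \<bar>s x\<bar> \<le> 1" using s by auto
  have g1: "\<And>x. x\<in>G \<Longrightarrow> \<bar>g x\<bar> \<le> 1" using g by auto
  have B: "(\<Sum>x\<in>G. \<bar>s x - g x\<bar>) / real (card G) \<le> sqrt ((\<Sum>x\<in>G. (s x - g x)\<^sup>2) / real (card G))"
    by (rule mean_abs_le_sqrt_mean_sq)
  show ?thesis
  proof (rule ap_density_telescope_bound)
    show "\<bar>ap_density W (\<lambda>x. s x - g x) s s\<bar> \<le> sqrt ((\<Sum>x\<in>G. (s x - g x)\<^sup>2) / real (card G))"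
      using ap_density_l1_slot1[where a="\<lambda>x. s x - g x" and b=s and c=s, OF W s1 s1] B by linarith
    show "\<bar>ap_density W g (\<lambda>x. s x - g x) s\<bar> \<le> sqrt ((\<Sum>x\<in>G. (s x - g x)\<^sup>2) / real (card G))"
      using ap_density_l1_slot2[where b="\<lambda>x. s x - g x" and a=g and c=s, OF W g1 s1] B by linarith
    show "\<bar>ap_density W g g (\<lambda>x. s x - g x)\<bar> \<le> sqrt ((\<Sum>x\<in>G. (s x - g x)\<^sup>2) / real (card G))"
      using ap_density_l1_slot3[where c="\<lambda>x. s x - g x" and a=g and b=g, OF W g1 g1] B by linarith
  qed
qed

lemma reg_steps_energy_gap: "\<epsilon> > 0 \<Longrightarrow> real (reg_steps \<epsilon>) * (\<epsilon>\<^sup>2 / 36) > 1"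
proof -
  assume e: "\<epsilon> > 0"
  have "real (reg_steps \<epsilon>) \<ge> 36 / \<epsilon>\<^sup>2 + 1" unfolding reg_steps_def by linarith
  then have "real (reg_steps \<epsilon>) * (\<epsilon>\<^sup>2 / 36) \<ge> (36 / \<epsilon>\<^sup>2 + 1) * (\<epsilon>\<^sup>2 / 36)"
    by (simp add: mult_right_mono)
  also have "(36 / \<epsilon>\<^sup>2 + 1) * (\<epsilon>\<^sup>2 / 36) = 1 + \<epsilon>\<^sup>2 / 36" using e by (simp add: field_simps)
  finally have "1 + \<epsilon>\<^sup>2 / 36 \<le> real (reg_steps \<epsilon>) * (\<epsilon>\<^sup>2 / 36)" .
  moreover have "0 < \<epsilon>\<^sup>2 / 36" using e by simp
  ultimately show ?thesis by linarith
qed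

lemma reg_threshold_pos: "\<epsilon> > 0 \<Longrightarrow> reg_threshold p \<epsilon> j > 0"
  using p_gt_1 unfolding reg_threshold_def by simp

lemma reg_threshold_le: "\<epsilon> > 0 \<Longrightarrow> reg_threshold p \<epsilon> j \<le> \<epsilon> / 6"
  using p_gt_1 unfolding reg_threshold_def by (simp add: divide_le_eq field_simps)

lemma card_span_spectrum_list_reg_threshold:
  assumes e: "\<epsilon> > 0" and f: "\<And>y. y\<in>G \<Longrightarrow> 0 \<le> f y \<and> f y \<le> 1"
  shows "real (card (span (spectrum_list f \<epsilon> j))) * reg_threshold p \<epsilon> j \<le> \<epsilon> / 6"
proof -
  have "real (card (span (spectrum_list f \<epsilon> j))) * reg_threshold p \<epsilon> j
      \<le> real p ^ reg_dim p \<epsilon> j * reg_threshold p \<epsilon> j"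
    using card_span_spectrum_list[where f=f and j=j, OF e f] reg_threshold_pos[OF e, of j]
    by (intro mult_right_mono) (simp_all add: of_nat_le_iff[symmetric])
  also have "\<dots> = \<epsilon> / 6" using p_gt_1 unfolding reg_threshold_def by simp
  finally show ?thesis .
qed

lemma card_span_spectrum_list_reg_bound:
  assumes e: "\<epsilon> > 0" and f: "\<And>y. y\<in>G \<Longrightarrow> 0 \<le> f y \<and> f y \<le> 1" and j: "j \<le> reg_steps \<epsilon>"
  shows "card (span (spectrum_list f \<epsilon> j)) \<le> reg_bound p \<epsilon>"
proof -
  have "card (span (spectrum_list f \<epsilon> j)) \<le> p ^ reg_dim p \<epsilon> j" by (rule card_span_spectrum_list[OF e f])
  also have "\<dots> \<le> p ^ reg_dim p \<epsilon> (reg_steps \<epsilon>)" using p_gt_1 reg_dim_mono[OF j] by (simp add: power_increasing)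
  finally show ?thesis by (simp add: reg_bound_def)
qed

lemma fourier_sub_cond_exp_small:
  assumes e: "\<epsilon> > 0" and L: "set L \<subseteq> G" and spectrum: "large_spectrum f \<epsilon> j \<subseteq> span L"
    and t: "t\<in>G"
  shows "cmod (fourier (\<lambda>x. complex_of_real (f x - cond_exp L f x)) t) \<le> reg_threshold p \<epsilon> j"
proof -
  let ?f = "\<lambda>y. complex_of_real (f y)"
  have "fourier (\<lambda>x. complex_of_real (f x - cond_exp L f x)) t = fourier (\<lambda>x. ?f x - proj L ?f x) t"
    using proj_of_real[OF L] by (intro fourier_cong) simp
  also have "\<dots> = (if t \<in> span L then 0 else fourier ?f t)"
    using fourier_proj[OF L t] by (simp add: fourier_diff)
  finally show ?thesis
    using spectrum t reg_threshold_pos[OF e, of j] by (cases "t \<in> span L") (auto simp: large_spectrum_def)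
qed

text \<open>Once the energy of f on the span grows by at most \<epsilon>^2/36 in one step, the coarse average g
  and the fine average s are close in L^2, while f - s has all Fourier coefficients below the
  threshold.\<close>

theorem arithmetic_regularity: assumes e: "\<epsilon> > 0" and f: "\<And>y. y\<in>G \<Longrightarrow> 0 \<le> f y \<and> f y \<le> 1"
  shows "\<exists>L. set L \<subseteq> G \<and> card (span L) \<le> reg_bound p \<epsilon> \<and>
     \<bar>ap_density G f f f - ap_density G (cond_exp L f) (cond_exp L f) (cond_exp L f)\<bar> \<le> \<epsilon> \<and>
     \<bar>ap_density (ann L) f f f - ap_density (ann L) (cond_exp L f) (cond_exp L f) (cond_exp L f)\<bar> \<le> \<epsilon>"
proof -
  obtain j where j: "j < reg_steps \<epsilon>"
    and gap: "energy (spectrum_list f \<epsilon> (Suc j)) f - energy (spectrum_list f \<epsilon> j) f \<le> \<epsilon>\<^sup>2 / 36"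
    using energy_step_small[where f=f, OF f _ reg_steps_energy_gap[OF e]] e by auto
  define L where "L = spectrum_list f \<epsilon> j"
  define s where "s = cond_exp (spectrum_list f \<epsilon> (Suc j)) f"
  define g where "g = cond_exp L f"
  define \<eta> where "\<eta> = reg_threshold p \<epsilon> j"
  have L: "set L \<subseteq> G" "set (spectrum_list f \<epsilon> (Suc j)) \<subseteq> G" unfolding L_def by (rule spectrum_list_subset)+
  have s01: "\<And>x. x\<in>G \<Longrightarrow> 0 \<le> s x \<and> s x \<le> 1" using cond_exp_bounds[where f=f, OF L(2) _ f] s_def by auto
  have g01: "\<And>x. x\<in>G \<Longrightarrow> 0 \<le> g x \<and> g x \<le> 1" using cond_exp_bounds[where f=f, OF L(1) _ f] g_def by auto
  have small: "\<And>t. t\<in>G \<Longrightarrow> cmod (fourier (\<lambda>x. complex_of_real (f x - s x)) t) \<le> \<eta>"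
    unfolding s_def \<eta>_def using e L(2) large_spectrum_in_span by (rule fourier_sub_cond_exp_small)
  have "sqrt ((\<Sum>x\<in>G. (s x - g x)\<^sup>2) / real (card G)) \<le> sqrt (\<epsilon>\<^sup>2 / 36)"
    using energy_step[of f \<epsilon> j] gap unfolding s_def g_def L_def by simp
  also have "\<dots> = \<epsilon> / 6" using e by (simp add: real_sqrt_divide)
  finally have close: "sqrt ((\<Sum>x\<in>G. (s x - g x)\<^sup>2) / real (card G)) \<le> \<epsilon> / 6" .
  have \<eta>: "0 \<le> \<eta>" unfolding \<eta>_def using reg_threshold_pos[OF e, of j] by simp
  have fourier_W: "\<bar>ap_density (ann L) f f f - ap_density (ann L) s s s\<bar> \<le> 3 * (\<epsilon> / 6)"
    using ap_density_fourier_part[where f=f and s=s, OF L(1) \<eta> f s01 small]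
      card_span_spectrum_list_reg_threshold[where f=f and j=j, OF e f]
    unfolding \<eta>_def L_def by linarith
  have fourier_G: "\<bar>ap_density G f f f - ap_density G s s s\<bar> \<le> 3 * (\<epsilon> / 6)"
    using ap_density_fourier_part[where L="[]" and f=f and s=s, OF _ \<eta> f s01 small] reg_threshold_le[OF e, of j]
    unfolding \<eta>_def by (simp add: ann_Nil)
  have physical_W: "\<bar>ap_density (ann L) s s s - ap_density (ann L) g g g\<bar> \<le> 3 * (\<epsilon> / 6)"
    using ap_density_physical_part[where s=s and g=g, OF ann_subset card_ann_pos[OF L(1)] s01 g01] close by linarith
  have physical_G: "\<bar>ap_density G s s s - ap_density G g g g\<bar> \<le> 3 * (\<epsilon> / 6)"
    using ap_density_physical_part[where s=s and g=g and W=G, OF subset_refl card_G_pos s01 g01] close by linarith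
  have "\<bar>ap_density G f f f - ap_density G g g g\<bar> \<le> \<epsilon>" using fourier_G physical_G by linarith
  moreover have "\<bar>ap_density (ann L) f f f - ap_density (ann L) g g g\<bar> \<le> \<epsilon>" using fourier_W physical_W by linarith
  moreover have "card (span L) \<le> reg_bound p \<epsilon>"
    unfolding L_def using card_span_spectrum_list_reg_bound[where f=f, OF e f] j by simp
  ultimately show ?thesis
    using L(1) unfolding g_def by blast
qed

subsection \<open>Lower bounds for the cube mean\<close>

lemma sum_translate_double: assumes x: "x\<in>G" shows "(\<Sum>d\<in>G. h (add (add x d) d)) = (\<Sum>y\<in>G. h y)"
proof -
  have "(\<Sum>d\<in>G. h (add (add x d) d)) = (\<Sum>d\<in>G. h (add x (add d d)))"
    using x assoc by (intro sum.cong) auto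
  also have "\<dots> = (\<Sum>d\<in>G. h (add x d))" using sum_double[of "\<lambda>d. h (add x d)"] by simp
  also have "\<dots> = (\<Sum>y\<in>G. h y)" using sum_translate x by blast
  finally show ?thesis .
qed

lemma sum_ap_tail_product: fixes h :: "'a \<Rightarrow> real" shows "(\<Sum>x\<in>G. \<Sum>d\<in>G. h (add x d) * h (add (add x d) d)) = (\<Sum>y\<in>G. h y) * (\<Sum>y\<in>G. h y)"
proof -
  have "(\<Sum>x\<in>G. \<Sum>d\<in>G. h (add x d) * h (add (add x d) d)) = (\<Sum>d\<in>G. \<Sum>x\<in>G. h (add x d) * h (add (add x d) d))"
    by (rule sum.swap)
  also have "\<dots> = (\<Sum>d\<in>G. \<Sum>y\<in>G. h y * h (add y d))"
  proof (rule sum.cong[OF refl])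
    fix d assume d: "d\<in>G"
    show "(\<Sum>x\<in>G. h (add x d) * h (add (add x d) d)) = (\<Sum>y\<in>G. h y * h (add y d))"
      using sum_translate_right[OF d, of "\<lambda>y. h y * h (add y d)"] by simp
  qed
  also have "\<dots> = (\<Sum>y\<in>G. \<Sum>d\<in>G. h y * h (add y d))" by (rule sum.swap)
  also have "\<dots> = (\<Sum>y\<in>G. h y * (\<Sum>d\<in>G. h (add y d)))" by (simp add: sum_distrib_left)
  also have "\<dots> = (\<Sum>y\<in>G. h y * (\<Sum>y\<in>G. h y))" using sum_translate by (intro sum.cong) auto
  finally show ?thesis by (simp add: sum_distrib_right)
qed

lemma ap_sums_mean_zero:
  fixes h :: "'a \<Rightarrow> real" assumes hs: "sum h G = 0"
  shows "(\<Sum>x\<in>G. \<Sum>d\<in>G. h x) = 0" "(\<Sum>x\<in>G. \<Sum>d\<in>G. h (add x d)) = 0"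
    "(\<Sum>x\<in>G. \<Sum>d\<in>G. h (add (add x d) d)) = 0" "(\<Sum>x\<in>G. \<Sum>d\<in>G. h x * h (add x d)) = 0"
    "(\<Sum>x\<in>G. \<Sum>d\<in>G. h x * h (add (add x d) d)) = 0"
    "(\<Sum>x\<in>G. \<Sum>d\<in>G. h (add x d) * h (add (add x d) d)) = 0"
  using hs sum_ap_tail_product[of h]
  by (simp_all add: sum_translate sum_translate_double flip: sum_distrib_left)

lemma ap_density_mean_split: fixes g :: "'a \<Rightarrow> real"
  assumes m: "(\<Sum>x\<in>G. g x) = real (card G) * \<alpha>"
  shows "ap_density G g g g = \<alpha>^3 + ap_density G (\<lambda>x. g x - \<alpha>) (\<lambda>x. g x - \<alpha>) (\<lambda>x. g x - \<alpha>)"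
proof -
  define h where "h x = g x - \<alpha>" for x
  define N where "N = real (card G)"
  have "sum h G = 0" using m by (simp add: h_def sum_subtractf N_def)
  note zero = ap_sums_mean_zero[OF this]
  have e: "g x * g y * g z = \<alpha>^3 + \<alpha>^2 * h x + \<alpha>^2 * h y + \<alpha>^2 * h z
      + \<alpha> * (h x * h y) + \<alpha> * (h x * h z) + \<alpha> * (h y * h z) + h x * h y * h z" for x y z
    by (simp add: h_def algebra_simps power2_eq_square power3_eq_cube)
  have "(\<Sum>x\<in>G. \<Sum>d\<in>G. g x * g (add x d) * g (add (add x d) d))
    = (\<Sum>x\<in>G. \<Sum>d\<in>G. \<alpha>^3) + \<alpha>^2 * (\<Sum>x\<in>G. \<Sum>d\<in>G. h x) + \<alpha>^2 * (\<Sum>x\<in>G. \<Sum>d\<in>G. h (add x d))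
      + \<alpha>^2 * (\<Sum>x\<in>G. \<Sum>d\<in>G. h (add (add x d) d)) + \<alpha> * (\<Sum>x\<in>G. \<Sum>d\<in>G. h x * h (add x d))
      + \<alpha> * (\<Sum>x\<in>G. \<Sum>d\<in>G. h x * h (add (add x d) d)) + \<alpha> * (\<Sum>x\<in>G. \<Sum>d\<in>G. h (add x d) * h (add (add x d) d))
      + (\<Sum>x\<in>G. \<Sum>d\<in>G. h x * h (add x d) * h (add (add x d) d))"
    unfolding e by (simp only: sum.distrib sum_distrib_left)
  also have "\<dots> = N * N * \<alpha>^3 + (\<Sum>x\<in>G. \<Sum>d\<in>G. h x * h (add x d) * h (add (add x d) d))"
    unfolding zero by (simp add: N_def)
  finally show ?thesis
    using card_G_pos unfolding ap_density_def h_def[symmetric] N_def by (simp add: field_simps)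
qed

lemma abs_sum_ap_le: fixes h :: "'a \<Rightarrow> real"
  shows "\<bar>\<Sum>x\<in>G. \<Sum>d\<in>G. h x * h (add x d) * h (add (add x d) d)\<bar>
    \<le> sqrt ((\<Sum>x\<in>G. (h x)\<^sup>2) * (\<Sum>x\<in>G. (h x)\<^sup>2) * (real (card G) * (\<Sum>x\<in>G. (h x)\<^sup>2)))"
proof -
  define N where "N = real (card G)"
  define V where "V = (\<Sum>x\<in>G. (h x)\<^sup>2)"
  let ?S = "\<lambda>(x,d). h x * h (add x d)"
  let ?U = "\<lambda>(x,d). h (add (add x d) d)"
  have "(\<Sum>x\<in>G. \<Sum>d\<in>G. h x * h (add x d) * h (add (add x d) d)) = (\<Sum>(x,d)\<in>G\<times>G. h x * h (add x d) * h (add (add x d) d))"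
    by (rule sum.cartesian_product)
  also have "\<dots> = (\<Sum>z\<in>G\<times>G. ?S z * ?U z)" by (intro sum.cong refl) (auto simp: split_beta)
  also have "\<bar>\<dots>\<bar> \<le> sqrt ((\<Sum>z\<in>G\<times>G. (?S z)\<^sup>2) * (\<Sum>z\<in>G\<times>G. (?U z)\<^sup>2))"
  proof -
    have c: "(\<Sum>z\<in>G\<times>G. ?S z * ?U z)\<^sup>2 \<le> (\<Sum>z\<in>G\<times>G. (?S z)\<^sup>2) * (\<Sum>z\<in>G\<times>G. (?U z)\<^sup>2)" by (rule Cauchy_Schwarz_ineq_sum)
    show ?thesis using real_sqrt_le_mono[OF c] by simp
  qed
  also have "(\<Sum>z\<in>G\<times>G. (?S z)\<^sup>2) = V * V"
  proof -
    have "(\<Sum>z\<in>G\<times>G. (?S z)\<^sup>2) = (\<Sum>x\<in>G. \<Sum>d\<in>G. (h x * h (add x d))\<^sup>2)"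
      by (subst sum.cartesian_product) (auto intro!: sum.cong simp: split_beta)
    also have "\<dots> = (\<Sum>x\<in>G. (h x)\<^sup>2 * (\<Sum>d\<in>G. (h (add x d))\<^sup>2))"
      by (simp add: power_mult_distrib sum_distrib_left)
    also have "\<dots> = (\<Sum>x\<in>G. (h x)\<^sup>2 * V)" unfolding V_def using sum_translate[of _ "\<lambda>y. (h y)\<^sup>2"] by (intro sum.cong) auto
    finally show ?thesis by (simp add: sum_distrib_right V_def)
  qed
  also have "(\<Sum>z\<in>G\<times>G. (?U z)\<^sup>2) = N * V"
  proof -
    have "(\<Sum>z\<in>G\<times>G. (?U z)\<^sup>2) = (\<Sum>x\<in>G. \<Sum>d\<in>G. (h (add (add x d) d))\<^sup>2)"
      by (subst sum.cartesian_product) (auto intro!: sum.cong simp: split_beta)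
    also have "\<dots> = (\<Sum>x\<in>G. V)" unfolding V_def by (rule sum.cong[OF refl]) (use sum_translate_double[of _ "\<lambda>y. (h y)\<^sup>2"] in auto)
    finally show ?thesis by (simp add: N_def)
  qed
  finally show ?thesis unfolding V_def N_def .
qed


lemma ap_density_abs_le_l2: fixes h :: "'a \<Rightarrow> real"
  shows "\<bar>ap_density G h h h\<bar> \<le> ((\<Sum>x\<in>G. (h x)\<^sup>2) / real (card G)) * sqrt ((\<Sum>x\<in>G. (h x)\<^sup>2) / real (card G))"
proof -
  define N where "N = real (card G)"
  define V where "V = (\<Sum>x\<in>G. (h x)\<^sup>2)"
  have Np: "N > 0" using card_G_pos N_def by simp
  have V0: "V \<ge> 0" unfolding V_def by (simp add: sum_nonneg)
  note 1 = abs_sum_ap_le[of h, folded V_def N_def]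
  have "sqrt (V * V * (N * V)) = V * sqrt (N * V)" using V0 by (simp add: real_sqrt_mult)
  also have "\<dots> = N * N * ((V / N) * sqrt (V / N))"
  proof -
    have "N * V = N\<^sup>2 * (V / N)" using Np by (simp add: power2_eq_square)
    then have "sqrt (N * V) = sqrt (N\<^sup>2) * sqrt (V / N)" by (simp only: real_sqrt_mult)
    then have "sqrt (N * V) = N * sqrt (V / N)" using Np by simp
    then show ?thesis using Np by (simp add: field_simps)
  qed
  finally have "\<bar>\<Sum>x\<in>G. \<Sum>d\<in>G. h x * h (add x d) * h (add (add x d) d)\<bar> \<le> N * N * ((V / N) * sqrt (V / N))"
    using 1 by linarith
  then show ?thesis unfolding ap_density_def N_def[symmetric] V_def[symmetric] using Np
    by (simp add: abs_divide divide_le_eq mult.commute mult.left_commute)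
qed

lemma ap_density_nonneg: assumes W: "W \<subseteq> G" and g: "\<And>x. x\<in>G \<Longrightarrow> 0 \<le> g x" shows "0 \<le> ap_density W g g g"
  unfolding ap_density_def using W g add_in by (intro divide_nonneg_nonneg sum_nonneg mult_nonneg_nonneg) auto

lemma avg_cube_ge:
  assumes g: "\<And>x. x\<in>G \<Longrightarrow> 0 \<le> g x" and mean: "avg G g = \<alpha>"
  shows "\<alpha>^3 + 2 * \<alpha> * avg G (\<lambda>x. (g x - \<alpha>)\<^sup>2) \<le> avg G (\<lambda>x. (g x)^3)"
proof -
  have "(g x)^3 = \<alpha>^3 + 3 * \<alpha>^2 * (g x - \<alpha>) + 2 * \<alpha> * (g x - \<alpha>)\<^sup>2 + (g x - \<alpha>)\<^sup>2 * g x" for x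
    by (simp add: power2_eq_square power3_eq_cube algebra_simps)
  then have "(\<Sum>x\<in>G. (g x)^3) = real (card G) * \<alpha>^3 + 3 * \<alpha>^2 * (\<Sum>x\<in>G. g x - \<alpha>)
      + 2 * \<alpha> * (\<Sum>x\<in>G. (g x - \<alpha>)\<^sup>2) + (\<Sum>x\<in>G. (g x - \<alpha>)\<^sup>2 * g x)"
    by (simp add: sum.distrib sum_distrib_left)
  moreover have "(\<Sum>x\<in>G. g x - \<alpha>) = 0"
    using mean card_G_pos unfolding avg_def by (simp add: sum_subtractf field_simps)
  ultimately have "(\<Sum>x\<in>G. (g x)^3)
      = real (card G) * \<alpha>^3 + 2 * \<alpha> * (\<Sum>x\<in>G. (g x - \<alpha>)\<^sup>2) + (\<Sum>x\<in>G. (g x - \<alpha>)\<^sup>2 * g x)"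
    by simp
  moreover have "0 \<le> (\<Sum>x\<in>G. (g x - \<alpha>)\<^sup>2 * g x)" using g by (simp add: sum_nonneg)
  ultimately have "real (card G) * \<alpha>^3 + 2 * \<alpha> * (\<Sum>x\<in>G. (g x - \<alpha>)\<^sup>2) \<le> (\<Sum>x\<in>G. (g x)^3)"
    by linarith
  then have "(real (card G) * \<alpha>^3 + 2 * \<alpha> * (\<Sum>x\<in>G. (g x - \<alpha>)\<^sup>2)) / real (card G)
      \<le> (\<Sum>x\<in>G. (g x)^3) / real (card G)"
    by (simp add: divide_right_mono)
  then show ?thesis
    using card_G_pos unfolding avg_def by (simp add: add_divide_distrib)
qed

text \<open>Writing g = \<alpha> + h with V the variance: the cubes gain 2\<alpha>V over \<alpha>^3, while the
  3-AP density loses at most V^(3/2); whichever of the two effects dominates, the bound holds.\<close>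

lemma cube_mean_ap_bound: assumes g: "\<And>x. x\<in>G \<Longrightarrow> 0 \<le> g x \<and> g x \<le> 1"
  and mean: "avg G g = \<alpha>"
  shows "3 * \<alpha>^3 \<le> 2 * avg G (\<lambda>x. (g x)^3) + ap_density G g g g"
proof -
  define h where "h x = g x - \<alpha>" for x
  define V where "V = avg G (\<lambda>x. (h x)\<^sup>2)"
  have m: "(\<Sum>x\<in>G. g x) = real (card G) * \<alpha>"
    using mean card_G_pos unfolding avg_def by (simp add: field_simps)
  have a0: "\<alpha> \<ge> 0"
    unfolding mean[symmetric] avg_def by (intro divide_nonneg_nonneg sum_nonneg) (use g in auto)
  have V0: "V \<ge> 0" unfolding V_def avg_def by (simp add: sum_nonneg)
  have cube: "\<alpha>^3 + 2 * (\<alpha> * V) \<le> avg G (\<lambda>x. (g x)^3)"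
    using avg_cube_ge[OF _ mean] g unfolding V_def h_def by (simp add: mult.assoc)
  have split: "ap_density G g g g = \<alpha>^3 + ap_density G h h h"
    using ap_density_mean_split[OF m] unfolding h_def .
  have small: "\<bar>ap_density G h h h\<bar> \<le> V * sqrt V"
    using ap_density_abs_le_l2[of h] unfolding V_def avg_def .
  have "0 \<le> \<alpha> * V" using a0 V0 by simp
  show ?thesis
  proof (cases "V \<ge> \<alpha>\<^sup>2 / 4")
    case True
    then have "\<alpha> * \<alpha>\<^sup>2 \<le> \<alpha> * (4 * V)" using a0 by (intro mult_left_mono) auto
    then have "\<alpha>^3 \<le> 4 * (\<alpha> * V)" by (simp add: power2_eq_square power3_eq_cube mult_ac)
    moreover have "ap_density G g g g \<ge> 0" using ap_density_nonneg[of G g] g by auto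
    ultimately show ?thesis using cube \<open>0 \<le> \<alpha> * V\<close> by linarith
  next
    case False
    then have "sqrt V \<le> sqrt (\<alpha>\<^sup>2 / 4)" by simp
    also have "\<dots> = \<alpha> / 2" using a0 by (simp add: real_sqrt_divide)
    finally have "V * sqrt V \<le> V * (\<alpha> / 2)" using V0 by (rule mult_left_mono)
    then have "V * sqrt V \<le> (\<alpha> * V) / 2" by (simp add: mult.commute)
    then show ?thesis using cube split small \<open>0 \<le> \<alpha> * V\<close> by linarith
  qed
qed

lemma level_set_bound: assumes g: "\<And>x. x\<in>G \<Longrightarrow> 0 \<le> g x \<and> g x \<le> 1"
  and mean: "avg G g = \<alpha>" and a: "\<alpha> > 0"
  shows "\<alpha>^3 \<le> 16 * avg G (\<lambda>x. (g x)^3) * (real (card {x\<in>G. \<alpha>/2 \<le> g x}) / real (card G))\<^sup>2"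
proof -
  define N where "N = real (card G)"
  define X where "X = {x\<in>G. \<alpha>/2 \<le> g x}"
  define S2 where "S2 = (\<Sum>x\<in>G. (g x)\<^sup>2)"
  define S3 where "S3 = (\<Sum>x\<in>G. (g x)^3)"
  have Np: "N > 0" using card_G_pos N_def by simp
  have m: "sum g G = N * \<alpha>"
    using mean Np unfolding avg_def N_def by (simp add: field_simps)
  have "N * \<alpha> \<le> sum g X + N * (\<alpha> / 2)"
    using sum_le_sum_level_set[OF finite_G, of "\<alpha> / 2" g] a m unfolding X_def N_def by simp
  then have X_mass: "N * \<alpha> / 2 \<le> sum g X" by simp
  have "(sum g X)\<^sup>2 \<le> (\<Sum>x\<in>X. (g x)\<^sup>2) * real (card X)" by (rule sum_squared_le_sum_of_squares)
  also have "\<dots> \<le> S2 * real (card X)"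
    unfolding S2_def X_def using finite_G by (intro mult_right_mono sum_mono2) auto
  finally have X_sq: "(sum g X)\<^sup>2 \<le> S2 * real (card X)" .
  have "(N * \<alpha> / 2)^4 \<le> ((sum g X)\<^sup>2)\<^sup>2"
    using X_mass Np a by (simp add: power_mono flip: power_mult)
  also have "\<dots> \<le> (S2 * real (card X))\<^sup>2"
    using X_sq by (intro power_mono) auto
  also have "\<dots> = S2\<^sup>2 * (real (card X))\<^sup>2" by (simp add: power_mult_distrib)
  also have "\<dots> \<le> S3 * (N * \<alpha>) * (real (card X))\<^sup>2"
    using sum_squares_sq_le[of G g] g m unfolding S2_def S3_def by (intro mult_right_mono) auto
  finally have "(N * \<alpha>) * (N^3 * \<alpha>^3 / 16) \<le> (N * \<alpha>) * (S3 * (real (card X))\<^sup>2)"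
    by (simp add: field_simps power_mult_distrib eval_nat_numeral)
  then have "N^3 * \<alpha>^3 / 16 \<le> S3 * (real (card X))\<^sup>2" using Np a by (simp add: mult_le_cancel_left_pos)
  then show ?thesis
    using Np unfolding S3_def N_def X_def avg_def by (simp add: field_simps power2_eq_square power3_eq_cube)
qed

lemma ap_density_ge_count: assumes g: "\<And>x. x\<in>G \<Longrightarrow> 0 \<le> g x" and t: "t \<ge> 0"
  shows "t^3 * real (card {(a, d) \<in> G \<times> G. t \<le> g a \<and> t \<le> g (add a d) \<and> t \<le> g (add (add a d) d)}) / (real (card G))\<^sup>2 \<le> ap_density G g g g"
proof -
  define Q where "Q = {(a, d) \<in> G \<times> G. t \<le> g a \<and> t \<le> g (add a d) \<and> t \<le> g (add (add a d) d)}"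
  have QG: "Q \<subseteq> G \<times> G" by (auto simp: Q_def)
  have fQ: "finite Q" using QG finite_G finite_subset by blast
  have "t^3 * real (card Q) = (\<Sum>z\<in>Q. t^3)" by simp
  also have "\<dots> \<le> (\<Sum>(x,d)\<in>Q. g x * g (add x d) * g (add (add x d) d))"
  proof (rule sum_mono)
    fix z assume "z\<in>Q"
    then obtain x d where z: "z = (x,d)" "t \<le> g x" "t \<le> g (add x d)" "t \<le> g (add (add x d) d)" by (auto simp: Q_def)
    have "t^3 = t * t * t" by (simp add: power3_eq_cube)
    also have "\<dots> \<le> g x * g (add x d) * g (add (add x d) d)" using z t by (intro mult_mono) auto
    finally show "t^3 \<le> (case z of (x,d) \<Rightarrow> g x * g (add x d) * g (add (add x d) d))" using z by simp
  qed
  also have "\<dots> \<le> (\<Sum>(x,d)\<in>G\<times>G. g x * g (add x d) * g (add (add x d) d))"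
    using QG finite_G g add_in by (intro sum_mono2) (auto intro!: mult_nonneg_nonneg)
  also have "\<dots> = (\<Sum>x\<in>G. \<Sum>d\<in>G. g x * g (add x d) * g (add (add x d) d))" by (rule sum.cartesian_product[symmetric])
  finally have "t^3 * real (card Q) \<le> (\<Sum>x\<in>G. \<Sum>d\<in>G. g x * g (add x d) * g (add (add x d) d))" .
  then show ?thesis unfolding ap_density_def Q_def[symmetric] using card_G_pos by (simp add: power2_eq_square divide_right_mono)
qed

definition ap_density_at :: "('a \<Rightarrow> real) \<Rightarrow> 'a \<Rightarrow> real" where
  "ap_density_at f d = (\<Sum>x\<in>G. f x * f (add x d) * f (add (add x d) d)) / real (card G)"

text \<open>Average over d \<in> W, where the trivial difference d = 0 contributes at most 1.\<close>

lemma exists_popular_difference: assumes W: "W \<subseteq> G" "zero \<in> W" "card W \<ge> 2" and f: "\<And>x. x\<in>G \<Longrightarrow> 0 \<le> f x \<and> f x \<le> 1"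
  shows "\<exists>d\<in>W. d \<noteq> zero \<and> ap_density_at f d \<ge> ap_density W f f f - 1 / (real (card W) - 1)"
proof (rule ccontr)
  assume "\<not> ?thesis"
  then have lt: "\<And>d. d\<in>W - {zero} \<Longrightarrow> ap_density_at f d < ap_density W f f f - 1 / (real (card W) - 1)" by force
  have fW: "finite W" using W finite_G finite_subset by blast
  define k where "k = real (card W)"
  have k2: "k \<ge> 2" using W k_def by simp
  have A0: "ap_density W f f f \<ge> 0" using ap_density_nonneg[OF W(1)] f by auto
  have "ap_density W f f f = (\<Sum>d\<in>W. ap_density_at f d) / k"
    unfolding ap_density_def ap_density_at_def k_def by (subst sum.swap) (simp add: sum_divide_distrib[symmetric] divide_divide_eq_left mult.commute)
  have Asum: "(\<Sum>d\<in>W. ap_density_at f d) = k * ap_density W f f f"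
    using \<open>ap_density W f f f = (\<Sum>d\<in>W. ap_density_at f d) / k\<close> k2 by simp
  have L0: "ap_density_at f zero \<le> 1"
  proof -
    have "(\<Sum>x\<in>G. f x * f (add x zero) * f (add (add x zero) zero)) \<le> (\<Sum>x\<in>G. 1)"
      using f add_in zero_in by (intro sum_mono) (auto intro!: mult_le_one)
    then show ?thesis unfolding ap_density_at_def using card_G_pos by (simp add: divide_le_eq)
  qed
  have "(\<Sum>d\<in>W. ap_density_at f d) = ap_density_at f zero + (\<Sum>d\<in>W - {zero}. ap_density_at f d)"
    using sum.remove[OF fW W(2)] by simp
  also have "(\<Sum>d\<in>W - {zero}. ap_density_at f d) < (\<Sum>d\<in>W - {zero}. ap_density W f f f - 1 / (real (card W) - 1))"
  proof (rule sum_strict_mono)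
    show "finite (W - {zero})" using fW by simp
    show "W - {zero} \<noteq> {}"
    proof
      assume "W - {zero} = {}"
      then have "W = {zero}" using W(2) by auto
      then show False using W(3) by simp
    qed
  qed (rule lt)
  also have "\<dots> = (k - 1) * ap_density W f f f - 1" using W fW k2 unfolding k_def by (simp add: card_Diff_singleton field_simps)
  finally have "k * ap_density W f f f < 1 + ((k - 1) * ap_density W f f f - 1)" using Asum L0 by linarith
  then show False using A0 by (simp add: algebra_simps)
qed

lemma regularity_increment:
  assumes e: "\<epsilon> > 0" and f: "\<And>x. x\<in>G \<Longrightarrow> 0 \<le> f x \<and> f x \<le> 1"
    and big: "real (reg_bound p \<epsilon>) * (2 + 1/\<epsilon>) \<le> real (card G)"
  obtains g where "\<And>x. x\<in>G \<Longrightarrow> 0 \<le> g x \<and> g x \<le> 1" "avg G g = avg G f"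
    "ap_density G g g g \<le> ap_density G f f f + \<epsilon>"
    "\<exists>d\<in>G. d \<noteq> zero \<and> avg G (\<lambda>x. (g x)^3) - 2 * \<epsilon> \<le> ap_density_at f d"
proof -
  obtain L where L: "set L \<subseteq> G" "card (span L) \<le> reg_bound p \<epsilon>"
    "\<bar>ap_density G f f f - ap_density G (cond_exp L f) (cond_exp L f) (cond_exp L f)\<bar> \<le> \<epsilon>"
    "\<bar>ap_density (ann L) f f f - ap_density (ann L) (cond_exp L f) (cond_exp L f) (cond_exp L f)\<bar> \<le> \<epsilon>"
    using arithmetic_regularity[where f=f, OF e f] by blast
  define g where "g = cond_exp L f"
  define W where "W = ann L"
  have span_pos: "real (card (span L)) > 0"
    using zero_in_span finite_span card_gt_0_iff by fastforce
  have "real (card (span L)) * (2 + 1/\<epsilon>) \<le> real (reg_bound p \<epsilon>) * (2 + 1/\<epsilon>)"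
    using L(2) e by (intro mult_right_mono) auto
  also have "\<dots> \<le> real (card G)" by (rule big)
  also have "real (card G) = real (card (span L)) * real (card W)"
    using card_span_mult_card_ann[OF L(1)] unfolding W_def by (metis of_nat_mult)
  finally have W_large: "2 + 1/\<epsilon> \<le> real (card W)"
    using span_pos by (simp add: mult_le_cancel_left_pos)
  have "0 < 1/\<epsilon>" using e by simp
  then have "card W \<ge> 2" using W_large by linarith
  then obtain d where d: "d \<in> W" "d \<noteq> zero"
    "ap_density W f f f - 1 / (real (card W) - 1) \<le> ap_density_at f d"
    using exists_popular_difference[where f=f, OF _ _ _ f] ann_subset zero_in_ann[OF L(1)]
    unfolding W_def by blast
  have "1 / (real (card W) - 1) \<le> 1 / (1/\<epsilon>)"
    using W_large \<open>0 < 1/\<epsilon>\<close> \<open>card W \<ge> 2\<close> by (intro divide_left_mono mult_pos_pos) auto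
  moreover have "ap_density W g g g = avg G (\<lambda>x. (g x)^3)"
    using ap_density_invariant[of "ann L" g] ann_subset card_ann_pos[OF L(1)] cond_exp_translate[OF L(1)]
    unfolding W_def g_def avg_def by simp
  ultimately have "avg G (\<lambda>x. (g x)^3) - 2 * \<epsilon> \<le> ap_density_at f d"
    using d(3) L(4) unfolding W_def g_def by simp
  moreover have "\<And>x. x\<in>G \<Longrightarrow> 0 \<le> g x \<and> g x \<le> 1"
    using cond_exp_bounds[where f=f, OF L(1) _ f] g_def by auto
  moreover have "avg G g = avg G f"
    using sum_cond_exp[OF L(1)] unfolding g_def avg_def by simp
  moreover have "ap_density G g g g \<le> ap_density G f f f + \<epsilon>"
    using L(3) unfolding g_def by linarith
  moreover have "d \<in> G" using d(1) ann_subset unfolding W_def by blast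
  ultimately show ?thesis
    using that d(2) by blast
qed

end

section \<open>The vector space F_p^n\<close>

definition vneg :: "nat \<Rightarrow> nat \<Rightarrow> (nat \<Rightarrow> nat) \<Rightarrow> (nat \<Rightarrow> nat)" where
  "vneg p n x = (\<lambda>i\<in>{..<n}. (p - x i) mod p)"

definition expp :: "nat \<Rightarrow> nat \<Rightarrow> complex" where
  "expp p a = cis (2 * pi * real a / real p)"

definition chi_Fpn :: "nat \<Rightarrow> nat \<Rightarrow> (nat \<Rightarrow> nat) \<Rightarrow> (nat \<Rightarrow> nat) \<Rightarrow> complex" where
  "chi_Fpn p n r x = expp p (\<Sum>i<n. r i * x i)"

lemma expp_add: "expp p (a + b) = expp p a * expp p b"
  unfolding expp_def by (simp add: cis_mult add_divide_distrib distrib_left)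

lemma expp_mod: assumes p: "p > 0" shows "expp p a = expp p (a mod p)"
proof -
  have "a = (a div p) * p + a mod p" by simp
  then have "expp p a = expp p ((a div p) * p) * expp p (a mod p)" by (metis expp_add)
  moreover have "expp p ((a div p) * p) = 1"
  proof -
    have "2 * pi * real ((a div p) * p) / real p = 2 * pi * real (a div p)" using p by simp
    then show ?thesis unfolding expp_def by simp
  qed
  ultimately show ?thesis by simp
qed

lemma expp_0[simp]: "expp p 0 = 1" by (simp add: expp_def)

lemma expp_sum: "finite I \<Longrightarrow> expp p (\<Sum>i\<in>I. f i) = (\<Prod>i\<in>I. expp p (f i))"
  by (induction I rule: finite_induct) (auto simp: expp_add)

lemma expp_mult: "expp p (r * j) = expp p r ^ j"
  unfolding expp_def DeMoivre by (simp add: mult_ac)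

lemma norm_expp: "cmod (expp p a) = 1" by (simp add: expp_def)

lemma Fpn_iff: "x \<in> Fpn p n \<longleftrightarrow> (\<forall>i<n. x i < p) \<and> x \<in> extensional {..<n}"
  unfolding Fpn_def PiE_iff by auto

lemma Fpn_eqI: "x \<in> Fpn p n \<Longrightarrow> y \<in> Fpn p n \<Longrightarrow> (\<And>i. i < n \<Longrightarrow> x i = y i) \<Longrightarrow> x = y"
  unfolding Fpn_iff by (metis extensionalityI lessThan_iff)

lemma vadd_in: "p > 0 \<Longrightarrow> vadd p n x y \<in> Fpn p n"
  unfolding Fpn_iff vadd_def by auto

lemma vneg_in: "p > 0 \<Longrightarrow> vneg p n x \<in> Fpn p n"
  unfolding Fpn_iff vneg_def by auto

lemma vzero_in: "p > 0 \<Longrightarrow> vzero n \<in> Fpn p n"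
  unfolding Fpn_iff vzero_def by auto

lemma vadd_app: "i < n \<Longrightarrow> vadd p n x y i = (x i + y i) mod p" by (simp add: vadd_def)

lemma funpow_vadd: "p > 0 \<Longrightarrow> (vadd p n x ^^ k) (vzero n) = (\<lambda>i\<in>{..<n}. (k * x i) mod p)"
proof (induction k)
  case 0 then show ?case by (simp add: vzero_def)
next
  case (Suc k)
  show ?case using Suc by (auto simp: vadd_def mod_add_right_eq)
qed

lemma double_mod_prime_inj: fixes p a b :: nat assumes p: "prime p" "odd p" and a: "a < p" "b < p" and e: "(a + a) mod p = (b + b) mod p"
  shows "a = b"
proof -
  have "p \<ge> 2" using p prime_ge_2_nat by blast
  moreover have "p \<noteq> 2" using p by auto
  ultimately have p2: "p > 2" by simp
  have "\<not> p dvd 2" using p2 by (simp add: nat_dvd_not_less)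
  have main: "x = y" if xy: "y \<le> x" "x < p" "(x + x) mod p = (y + y) mod p" for x y
  proof -
    have "p dvd (x + x) - (y + y)" using xy by (simp add: mod_eq_dvd_iff_nat)
    moreover have "x + x - (y + y) = 2 * (x - y)" by simp
    ultimately have "p dvd 2 * (x - y)" by simp
    then have "p dvd (x - y)" using \<open>\<not> p dvd 2\<close> p(1) by (simp add: prime_dvd_mult_iff)
    moreover have "x - y < p" using xy by simp
    ultimately show ?thesis using xy by (metis dvd_imp_le le_antisym less_le_not_le nat_less_le not_gr0 zero_less_diff diff_is_0_eq)
  qed
  show ?thesis
  proof (cases "b \<le> a")
    case True then show ?thesis using main a e by blast
  next
    case False then show ?thesis using main[of a b] a e by simp
  qed
qed

lemma chi_Fpn_vadd: assumes p: "p > 0"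
  shows "chi_Fpn p n r (vadd p n x y) = chi_Fpn p n r x * chi_Fpn p n r y"
proof -
  have "(\<Sum>i<n. r i * vadd p n x y i) mod p = (\<Sum>i<n. r i * (x i + y i)) mod p"
  proof -
    have "(\<Sum>i<n. r i * vadd p n x y i) mod p = (\<Sum>i<n. (r i * vadd p n x y i) mod p) mod p"
      by (simp add: mod_sum_eq)
    also have "(\<Sum>i<n. (r i * vadd p n x y i) mod p) = (\<Sum>i<n. (r i * (x i + y i)) mod p)"
      by (intro sum.cong refl) (simp add: vadd_app mod_mult_right_eq)
    also have "(\<Sum>i<n. (r i * (x i + y i)) mod p) mod p = (\<Sum>i<n. r i * (x i + y i)) mod p"
      by (simp add: mod_sum_eq)
    finally show ?thesis .
  qed
  then have "chi_Fpn p n r (vadd p n x y) = expp p (\<Sum>i<n. r i * (x i + y i))"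
    unfolding chi_Fpn_def using expp_mod[OF p] by metis
  also have "\<dots> = expp p ((\<Sum>i<n. r i * x i) + (\<Sum>i<n. r i * y i))"
    by (simp add: distrib_left sum.distrib)
  finally show ?thesis by (simp add: expp_add chi_Fpn_def)
qed

lemma sum_expp_root_of_unity: assumes p: "p > 0" and r: "0 < r" "r < p"
  shows "(\<Sum>j<p. expp p (r * j)) = 0"
proof -
  define z where "z = expp p r"
  have zp: "z ^ p = 1"
  proof -
    have "z ^ p = expp p (r * p)" by (simp add: z_def expp_mult)
    also have "\<dots> = expp p 0" using expp_mod[OF p, of "r * p"] by simp
    finally show ?thesis by simp
  qed
  have z1: "z \<noteq> 1"
  proof
    assume "z = 1"
    then have "Re z = 1" by simp
    then have "cos (2 * pi * real r / real p) = 1" unfolding z_def expp_def by simp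
    then obtain k :: int where k: "2 * pi * real r / real p = real_of_int k * 2 * pi"
      using cos_one_2pi_int by blast
    then have "(2 * pi) * (real r / real p) = (2 * pi) * real_of_int k" by (simp add: mult_ac)
    then have "real r / real p = real_of_int k" using pi_gt_zero by (metis mult_cancel_left pi_neq_zero zero_neq_numeral mult_eq_0_iff)
    moreover have "0 < real r / real p" "real r / real p < 1" using r p by auto
    ultimately have "0 < real_of_int k" "real_of_int k < 1" by auto
    then have "0 < k" "k < 1" by simp_all
    then show False by simp
  qed
  have "(\<Sum>j<p. expp p (r * j)) = (\<Sum>j<p. z ^ j)" by (simp add: z_def expp_mult)
  also have "\<dots> = (z ^ p - 1) / (z - 1)" using geometric_sum[OF z1] by simp
  also have "\<dots> = 0" using zp by simp
  finally show ?thesis .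
qed

lemma sum_chi_Fpn: assumes p: "p > 0" and r: "r \<in> Fpn p n" "r \<noteq> vzero n"
  shows "(\<Sum>x\<in>Fpn p n. chi_Fpn p n r x) = 0"
proof -
  obtain i0 where i0: "i0 < n" "r i0 \<noteq> 0"
  proof (rule ccontr)
    assume "\<not> thesis"
    then have "\<And>i. i < n \<Longrightarrow> r i = 0" using that by blast
    then have "r = vzero n" using Fpn_eqI[OF r(1) vzero_in[OF p]] by (simp add: vzero_def)
    then show False using r by simp
  qed
  have ri0: "r i0 < p" using r(1) i0 by (simp add: Fpn_iff)
  have "(\<Sum>x\<in>Fpn p n. chi_Fpn p n r x) = (\<Sum>x\<in>Fpn p n. \<Prod>i<n. expp p (r i * x i))"
    unfolding chi_Fpn_def by (simp add: expp_sum)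
  also have "\<dots> = (\<Prod>i<n. \<Sum>j<p. expp p (r i * j))"
    unfolding Fpn_def by (rule prod_sum_PiE[symmetric]) auto
  also have "\<dots> = 0"
    using sum_expp_root_of_unity[OF p _ ri0] i0 by (subst prod_zero_iff) auto
  finally show ?thesis .
qed

lemma bij_double_Fpn: assumes "prime p" "odd p"
  shows "bij_betw (\<lambda>x. vadd p n x x) (Fpn p n) (Fpn p n)"
proof -
  have p0: "p > 0" using assms prime_gt_0_nat by blast
  have fin: "finite (Fpn p n)" unfolding Fpn_def by (simp add: finite_PiE)
  have inj: "inj_on (\<lambda>x. vadd p n x x) (Fpn p n)"
  proof (rule inj_onI)
    fix x y assume xy: "x \<in> Fpn p n" "y \<in> Fpn p n" "vadd p n x x = vadd p n y y"
    show "x = y"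
    proof (rule Fpn_eqI[OF xy(1,2)])
      fix i assume i: "i < n"
      have "(x i + x i) mod p = (y i + y i) mod p" using xy(3) i by (metis vadd_app)
      then show "x i = y i" using double_mod_prime_inj[OF assms] xy i by (simp add: Fpn_iff)
    qed
  qed
  moreover have "(\<lambda>x. vadd p n x x) ` Fpn p n \<subseteq> Fpn p n" using vadd_in[OF p0] by auto
  then have "(\<lambda>x. vadd p n x x) ` Fpn p n = Fpn p n"
    using card_subset_eq[OF fin] card_image[OF inj] by simp
  ultimately show ?thesis by (simp add: bij_betw_def)
qed

lemma fourier_group_Fpn: fixes p n :: nat assumes pr: "prime p" and od: "odd p"
  shows "fourier_group (Fpn p n) (vadd p n) (vzero n) (vneg p n) (chi_Fpn p n) p"
proof -
  have p1: "p > 1" using pr prime_gt_1_nat by blast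
  then have p0: "p > 0" by simp
  show ?thesis
  proof (unfold_locales)
    show "finite (Fpn p n)" unfolding Fpn_def by (simp add: finite_PiE)
    show "vzero n \<in> Fpn p n" using vzero_in[OF p0] .
    show "vadd p n x y \<in> Fpn p n" for x y using vadd_in[OF p0] .
    show "vneg p n x \<in> Fpn p n" for x using vneg_in[OF p0] .
    show "vadd p n (vadd p n x y) z = vadd p n x (vadd p n y z)" for x y z
      by (rule Fpn_eqI[OF vadd_in[OF p0] vadd_in[OF p0]]) (simp add: vadd_app mod_add_left_eq mod_add_right_eq add.assoc)
    show "vadd p n x y = vadd p n y x" for x y
      by (rule Fpn_eqI[OF vadd_in[OF p0] vadd_in[OF p0]]) (simp add: vadd_app add.commute)
    show "vadd p n (vzero n) x = x" if "x \<in> Fpn p n" for x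
      by (rule Fpn_eqI[OF vadd_in[OF p0] that]) (use that in \<open>simp add: vadd_app vzero_def Fpn_iff\<close>)
    show "vadd p n x (vneg p n x) = vzero n" if "x \<in> Fpn p n" for x
    proof (rule Fpn_eqI[OF vadd_in[OF p0] vzero_in[OF p0]])
      fix i assume "i < n"
      then have "x i < p" using that by (simp add: Fpn_iff)
      then show "vadd p n x (vneg p n x) i = vzero n i"
        using \<open>i < n\<close> by (simp add: vadd_app vneg_def vzero_def mod_add_right_eq)
    qed
    show "1 < p" using p1 .
    show "(vadd p n x ^^ p) (vzero n) = vzero n" if "x \<in> Fpn p n" for x
      using funpow_vadd[OF p0] by (simp add: vzero_def)
    show "bij_betw (\<lambda>x. vadd p n x x) (Fpn p n) (Fpn p n)" by (rule bij_double_Fpn[OF pr od])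
    show "chi_Fpn p n r (vadd p n x y) = chi_Fpn p n r x * chi_Fpn p n r y" for r x y using chi_Fpn_vadd[OF p0] .
    show "chi_Fpn p n r x = chi_Fpn p n x r" for r x unfolding chi_Fpn_def by (simp add: mult.commute)
    show "cmod (chi_Fpn p n r x) = 1" for r x by (simp add: chi_Fpn_def norm_expp)
    show "(\<Sum>x\<in>Fpn p n. chi_Fpn p n r x) = 0" if "r \<in> Fpn p n" "r \<noteq> vzero n" for r
      using sum_chi_Fpn[OF p0 that] .
  qed
qed

section \<open>The density increment\<close>

definition ap3_density :: "nat \<Rightarrow> nat \<Rightarrow> ((nat \<Rightarrow> nat) \<Rightarrow> real) \<Rightarrow> real" where
  "ap3_density p n f =
     avg (Fpn p n \<times> Fpn p n) (\<lambda>(x, d). f x * f (vadd p n x d) * f (vadd p n (vadd p n x d) d))"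

definition ap3_density_at :: "nat \<Rightarrow> nat \<Rightarrow> ((nat \<Rightarrow> nat) \<Rightarrow> real) \<Rightarrow> (nat \<Rightarrow> nat) \<Rightarrow> real" where
  "ap3_density_at p n f d = avg (Fpn p n) (\<lambda>x. f x * f (vadd p n x d) * f (vadd p n (vadd p n x d) d))"

lemma card_Fpn: "card (Fpn p n) = p ^ n"
  unfolding Fpn_def by (simp add: card_PiE)

locale Fpn_space =
  fixes p n :: nat
  assumes prime_p: "prime p" and odd_p: "odd p"
begin

sublocale fourier_group "Fpn p n" "vadd p n" "vzero n" "vneg p n" "chi_Fpn p n" p
  by (rule fourier_group_Fpn[OF prime_p odd_p])

lemma ap3_density_eq: "ap3_density p n h = ap_density (Fpn p n) h h h"
  unfolding ap3_density_def ap_density_def avg_def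
  by (simp add: sum.cartesian_product[symmetric] card_cartesian_product)

lemma ap3_density_at_eq: "ap3_density_at p n h d = ap_density_at h d"
  unfolding ap3_density_at_def ap_density_at_def avg_def ..

lemma ap3_density_ge_level_set_powr:
  assumes "AP_constant p C" and "1 \<le> n" and g: "\<forall>x\<in>Fpn p n. 0 \<le> g x" and "0 \<le> t"
  shows "t ^ 3 * (real (card {x \<in> Fpn p n. t \<le> g x}) / real p ^ n) powr C \<le> ap3_density p n g"
proof -
  define X where "X = {x \<in> Fpn p n. t \<le> g x}"
  define APs where "APs = {(a, d) \<in> Fpn p n \<times> Fpn p n. a \<in> X \<and> vadd p n a d \<in> X \<and> vadd p n (vadd p n a d) d \<in> X}"
  have N: "real (card (Fpn p n)) = real p ^ n" by (simp add: card_Fpn)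
  have N_pos: "0 < (real p ^ n)\<^sup>2" using prime_gt_0_nat[OF prime_p] by simp
  have "X \<subseteq> Fpn p n" unfolding X_def by blast
  then have "(real (card X) / real p ^ n) powr C * (real p ^ n)\<^sup>2 \<le> real (card APs)"
    using assms(1,2) unfolding AP_constant_def APs_def by (simp add: power_mult mult.commute)
  then have "t ^ 3 * ((real (card X) / real p ^ n) powr C * (real p ^ n)\<^sup>2) \<le> t ^ 3 * real (card APs)"
    using \<open>0 \<le> t\<close> by (intro mult_left_mono) auto
  also have "APs = {(a, d) \<in> Fpn p n \<times> Fpn p n. t \<le> g a \<and> t \<le> g (vadd p n a d) \<and> t \<le> g (vadd p n (vadd p n a d) d)}"
    unfolding APs_def X_def using add_in by auto
  also have "t ^ 3 * real (card \<dots>) \<le> ap3_density p n g * (real p ^ n)\<^sup>2"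
    using ap_density_ge_count[of g t] g \<open>0 \<le> t\<close> N_pos unfolding ap3_density_eq N
    by (simp add: pos_divide_le_eq)
  finally show ?thesis
    using N_pos unfolding X_def by (simp add: mult.assoc[symmetric])
qed
end

lemma increment_conclusion_of_cube_mean_bound:
  fixes p :: nat and \<alpha> \<beta> \<gamma> :: real
  assumes p: "prime p" "odd p" and gamma: "\<gamma> > \<alpha> ^ 3"
    and bound: "\<And>\<delta>. \<delta> > 0 \<Longrightarrow> \<exists>\<epsilon>>0. \<forall>n\<ge>1. \<forall>g.
      (\<forall>x\<in>Fpn p n. 0 \<le> g x \<and> g x \<le> 1) \<and> avg (Fpn p n) g = \<alpha> \<and> ap3_density p n g \<le> \<beta> + \<epsilon> \<longrightarrow>
      \<gamma> - \<delta> + 2 * \<epsilon> \<le> avg (Fpn p n) (\<lambda>x. (g x) ^ 3)"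
  shows "increment_conclusion p \<alpha> \<beta> \<gamma>"
  unfolding increment_conclusion_def
proof (intro conjI gamma allI impI)
  fix \<delta> :: real assume "\<delta> > 0"
  then obtain \<epsilon> where e: "\<epsilon> > 0" and bound_\<epsilon>: "\<forall>n\<ge>1. \<forall>g.
      (\<forall>x\<in>Fpn p n. 0 \<le> g x \<and> g x \<le> 1) \<and> avg (Fpn p n) g = \<alpha> \<and> ap3_density p n g \<le> \<beta> + \<epsilon> \<longrightarrow>
      \<gamma> - \<delta> + 2 * \<epsilon> \<le> avg (Fpn p n) (\<lambda>x. (g x) ^ 3)"
    using bound by blast
  define n' where "n' = nat \<lceil>real (reg_bound p \<epsilon>) * (2 + 1/\<epsilon>)\<rceil>"
  show "\<exists>n'. \<forall>n>n'. \<forall>f. (\<forall>x\<in>Fpn p n. 0 \<le> f x \<and> f x \<le> 1) \<and> avg (Fpn p n) f = \<alpha> \<and>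
        avg (Fpn p n \<times> Fpn p n) (\<lambda>(x, d). f x * f (vadd p n x d) * f (vadd p n (vadd p n x d) d)) \<le> \<beta> \<longrightarrow>
        (\<exists>d\<in>Fpn p n. d \<noteq> vzero n \<and> \<gamma> - \<delta> \<le> avg (Fpn p n) (\<lambda>x. f x * f (vadd p n x d) * f (vadd p n (vadd p n x d) d)))"
  proof (intro exI[of _ n'] allI impI, elim conjE)
    fix n :: nat and f :: "(nat \<Rightarrow> nat) \<Rightarrow> real"
    assume n: "n' < n" and f: "\<forall>x\<in>Fpn p n. 0 \<le> f x \<and> f x \<le> 1" and mean: "avg (Fpn p n) f = \<alpha>"
      and few: "avg (Fpn p n \<times> Fpn p n) (\<lambda>(x, d). f x * f (vadd p n x d) * f (vadd p n (vadd p n x d) d)) \<le> \<beta>"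
    have few_aps: "ap3_density p n f \<le> \<beta>" using few unfolding ap3_density_def .
    interpret Fpn_space p n using p by unfold_locales
    have "real (reg_bound p \<epsilon>) * (2 + 1/\<epsilon>) \<le> real n" using n unfolding n'_def by linarith
    also have "\<dots> \<le> real p ^ n"
      using less_exp[of n] power_mono[of 2 "real p" n] prime_ge_2_nat[OF p(1)] by fastforce
    finally have "real (reg_bound p \<epsilon>) * (2 + 1/\<epsilon>) \<le> real (card (Fpn p n))" by (simp add: card_Fpn)
    then obtain g where g: "\<And>x. x \<in> Fpn p n \<Longrightarrow> 0 \<le> g x \<and> g x \<le> 1" "avg (Fpn p n) g = \<alpha>"
        "ap3_density p n g \<le> ap3_density p n f + \<epsilon>"
      and d: "\<exists>d\<in>Fpn p n. d \<noteq> vzero n \<and> avg (Fpn p n) (\<lambda>x. (g x)^3) - 2 * \<epsilon> \<le> ap3_density_at p n f d"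
      using regularity_increment[OF e] f mean unfolding ap3_density_eq ap3_density_at_eq by metis
    have "\<gamma> - \<delta> + 2 * \<epsilon> \<le> avg (Fpn p n) (\<lambda>x. (g x) ^ 3)"
      using bound_\<epsilon> g few_aps n by fastforce
    with d show "\<exists>d\<in>Fpn p n. d \<noteq> vzero n \<and> \<gamma> - \<delta> \<le> avg (Fpn p n) (\<lambda>x. f x * f (vadd p n x d) * f (vadd p n (vadd p n x d) d))"
      unfolding ap3_density_at_def by fastforce
  qed
qed

lemma increment_conclusion_mean_gain:
  fixes p :: nat and \<alpha> \<beta> :: real
  assumes p: "prime p" "odd p" and "\<beta> < \<alpha> ^ 3"
  shows "increment_conclusion p \<alpha> \<beta> (\<alpha> ^ 3 + (\<alpha> ^ 3 - \<beta>) / 2)"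
proof (rule increment_conclusion_of_cube_mean_bound[OF p], goal_cases)
  case 1
  then show ?case using \<open>\<beta> < \<alpha> ^ 3\<close> by simp
next
  case (2 \<delta>)
  show ?case
  proof (intro exI[of _ "\<delta>/4"] conjI allI impI; (elim conjE)?)
    show "\<delta>/4 > 0" using 2 by simp
    fix n :: nat and g :: "(nat \<Rightarrow> nat) \<Rightarrow> real"
    assume "\<forall>x\<in>Fpn p n. 0 \<le> g x \<and> g x \<le> 1" and mean: "avg (Fpn p n) g = \<alpha>"
      and few_aps: "ap3_density p n g \<le> \<beta> + \<delta>/4"
    interpret Fpn_space p n using p by unfold_locales
    have "3 * \<alpha>^3 \<le> 2 * avg (Fpn p n) (\<lambda>x. (g x)^3) + ap3_density p n g"
      using cube_mean_ap_bound[OF _ mean] \<open>\<forall>x\<in>Fpn p n. _\<close> unfolding ap3_density_eq by blast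
    then have "3 * \<alpha>^3 - \<beta> - \<delta>/4 \<le> 2 * avg (Fpn p n) (\<lambda>x. (g x)^3)"
      using few_aps by linarith
    then show "\<alpha> ^ 3 + (\<alpha> ^ 3 - \<beta>) / 2 - \<delta> + 2 * (\<delta>/4) \<le> avg (Fpn p n) (\<lambda>x. (g x) ^ 3)"
      using 2 by (simp add: field_simps)
  qed
qed

lemma powr_gain_bound: fixes a M \<mu> b C :: real
  assumes a0: "a > 0" and b0: "b > 0" and C: "C \<ge> 1" and big: "a > 2 powr (8 + 8*C) * b"
    and lev: "a \<le> 16 * M * \<mu>\<^sup>2" and cnt: "a * \<mu> powr C \<le> 16 * b" and \<mu>0: "\<mu> \<ge> 0"
  shows "(a / b) powr (1 / (2*C)) * a \<le> M"
proof -
  have \<mu>: "\<mu> > 0" using lev a0 \<mu>0 by (cases "\<mu> = 0") auto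
  have M: "M > 0" using lev a0 by (smt (verit) mult_nonpos_nonneg zero_le_power2)
  define l where "l = ln (a / b)"
  define m where "m = ln \<mu>"
  define L where "L = ln (2::real)"
  have ln16: "ln (16::real) = 4 * L"
    unfolding L_def using ln_realpow[of 2 4] by simp
  have "2 powr (8 + 8*C) < a / b" using big b0 by (simp add: pos_less_divide_eq)
  then have "ln (2 powr (8 + 8*C)) < l"
    unfolding l_def using a0 b0 by (subst ln_less_cancel_iff) auto
  then have hl: "8 * L + 8 * (C * L) < l" unfolding L_def by (simp add: ln_powr algebra_simps)
  have "\<mu> powr C \<le> 16 / (a / b)" using cnt a0 b0 by (simp add: field_simps)
  then have "ln (\<mu> powr C) \<le> ln (16 / (a / b))"
    using a0 b0 \<mu> by (subst ln_le_cancel_iff) auto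
  then have hm: "C * m \<le> 4 * L - l" unfolding m_def l_def using a0 b0 \<mu> ln16 by (simp add: ln_powr ln_div ln_mult)
  have "ln a \<le> ln (16 * M * \<mu>\<^sup>2)" using lev a0 by simp
  then have hM: "ln a \<le> 4 * L + ln M + 2 * m" using M \<mu> ln16 unfolding m_def by (simp add: ln_mult ln_realpow)
  have "(l / (2*C) + 4 * L + 2 * m) * (2*C) = l + 8 * (C * L) + 4 * (C * m)" using C by (simp add: field_simps)
  also have "\<dots> \<le> 0" using hl hm C L_def by (smt (verit) ln_gt_zero mult_nonneg_nonneg)
  finally have "l / (2*C) + 4 * L + 2 * m \<le> 0" using C by (simp add: mult_le_0_iff)
  then have "ln ((a / b) powr (1 / (2*C)) * a) \<le> ln M"
    using hM a0 b0 unfolding l_def by (simp add: ln_mult ln_powr)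
  then show ?thesis using a0 b0 M by simp
qed

lemma increment_conclusion_power_gain:
  fixes p :: nat and \<alpha> \<beta> C :: real
  assumes p: "prime p" "odd p" and "0 < \<alpha>" and "0 < \<beta>" and "AP_constant p C"
    and large: "\<alpha> ^ 3 > 2 powr (8 + 8 * C) * \<beta>"
  shows "increment_conclusion p \<alpha> \<beta> ((\<alpha> ^ 3 / \<beta>) powr (1 / (2 * C)) * \<alpha> ^ 3)"
proof (rule increment_conclusion_of_cube_mean_bound[OF p], goal_cases)
  have C: "C \<ge> 1" using \<open>AP_constant p C\<close> unfolding AP_constant_def by simp
  case 1
  have "1 \<le> 2 powr (8 + 8 * C)" using C by (intro ge_one_powr_ge_zero) auto
  then have "\<beta> \<le> 2 powr (8 + 8 * C) * \<beta>" using \<open>0 < \<beta>\<close> by simp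
  then have "\<beta> < \<alpha> ^ 3" using large by linarith
  then have "\<alpha> ^ 3 / \<beta> > 1" using \<open>0 < \<beta>\<close> by simp
  then show ?case using C \<open>0 < \<alpha>\<close> by (simp add: gr_one_powr)
next
  have C: "C \<ge> 1" using \<open>AP_constant p C\<close> unfolding AP_constant_def by simp
  case (2 \<delta>)
  define \<epsilon> where "\<epsilon> = min (\<delta>/4) \<beta>"
  show ?case
  proof (intro exI[of _ \<epsilon>] conjI allI impI; (elim conjE)?)
    show "\<epsilon> > 0" using 2 \<open>0 < \<beta>\<close> by (simp add: \<epsilon>_def)
    fix n :: nat and g :: "(nat \<Rightarrow> nat) \<Rightarrow> real"
    assume "1 \<le> n" and g: "\<forall>x\<in>Fpn p n. 0 \<le> g x \<and> g x \<le> 1" and mean: "avg (Fpn p n) g = \<alpha>"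
      and few_aps: "ap3_density p n g \<le> \<beta> + \<epsilon>"
    interpret Fpn_space p n using p by unfold_locales
    define \<mu> where "\<mu> = real (card {x \<in> Fpn p n. \<alpha> / 2 \<le> g x}) / real p ^ n"
    have "\<forall>x\<in>Fpn p n. 0 \<le> g x" using g by blast
    then have "(\<alpha> / 2) ^ 3 * \<mu> powr C \<le> ap3_density p n g"
      unfolding \<mu>_def using \<open>0 < \<alpha>\<close>
      by (intro ap3_density_ge_level_set_powr[OF \<open>AP_constant p C\<close> \<open>1 \<le> n\<close>]) auto
    also have "\<dots> \<le> 2 * \<beta>" using few_aps unfolding \<epsilon>_def by linarith
    finally have "\<alpha> ^ 3 * \<mu> powr C \<le> 16 * \<beta>" by (simp add: power_divide field_simps)
    moreover have "\<alpha> ^ 3 \<le> 16 * avg (Fpn p n) (\<lambda>x. (g x)^3) * \<mu>\<^sup>2"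
      using level_set_bound[OF _ mean \<open>0 < \<alpha>\<close>] g unfolding \<mu>_def card_Fpn by simp
    ultimately have "(\<alpha> ^ 3 / \<beta>) powr (1 / (2 * C)) * \<alpha> ^ 3 \<le> avg (Fpn p n) (\<lambda>x. (g x)^3)"
      using powr_gain_bound[OF _ \<open>0 < \<beta>\<close> C large] \<open>0 < \<alpha>\<close> by (simp add: \<mu>_def)
    then show "(\<alpha> ^ 3 / \<beta>) powr (1 / (2 * C)) * \<alpha> ^ 3 - \<delta> + 2 * \<epsilon> \<le> avg (Fpn p n) (\<lambda>x. (g x) ^ 3)"
      unfolding \<epsilon>_def using 2 by linarith
  qed
qed

theorem mainTheorem16:
  fixes p :: nat and \<alpha> \<beta> :: real
  assumes "prime p" and "odd p"
    and "0 < \<alpha>" and "\<alpha> \<le> 1"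
    and "\<beta> < \<alpha> ^ 3"
  shows "increment_conclusion p \<alpha> \<beta> (\<alpha> ^ 3 + (\<alpha> ^ 3 - \<beta>) / 2) \<and>
         (\<forall>C. AP_constant p C \<and> 0 < \<beta> \<and> \<alpha> ^ 3 > 2 powr (8 + 8 * C) * \<beta> \<longrightarrow>
              increment_conclusion p \<alpha> \<beta> ((\<alpha> ^ 3 / \<beta>) powr (1 / (2 * C)) * \<alpha> ^ 3))"
  using increment_conclusion_mean_gain[OF assms(1,2,5)]
    increment_conclusion_power_gain[OF assms(1,2,3)] by blast

end
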